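(* Let $a,b\in\mathbb{Q}$ be such that $f(x)=x^{12}+ax^6+b$ is irreducible over $\mathbb{Q}$. Let $G_4$ be the Galois group of $g_4(x)=x^4+ax^2+b$ and $G_6$ the Galois group of $g_6(x)=x^6+ax^3+b$ over $\mathbb{Q}$. Then: (1) $\mathrm{disc}(f)\in\mathbb{Q}^2$ if and only if $G_4$ is $4T2$; (2) $|\mathrm{Gal}(f)|\le \min\{18|G_4|,\,4|G_6|\}$.
   Context: $\mathbb{Q}^2$ is the set of squares of rational numbers; $\mathrm{disc}(f)$ is the discriminant of $f$. Galois groups are regarded as transitive permutation groups on the roots up to conjugacy; $nTj$ denotes the $j$-th conjugacy class of transitive subgroups of $S_n$ in the Butler–McKay numbering. ($4T2$ is the Klein four-group $V_4\le S_4$.) *)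

theory Defs
  imports Complex_Main "HOL-Computational_Algebra.Computational_Algebra"
begin

definition croots :: "rat poly \<Rightarrow> complex set" where
  "croots p = {z. poly (map_poly of_rat p) z = 0}"

definition is_subfield :: "complex set \<Rightarrow> bool" where
  "is_subfield S \<longleftrightarrow> 0 \<in> S \<and> 1 \<in> S \<and>
     (\<forall>x\<in>S. \<forall>y\<in>S. x + y \<in> S \<and> x - y \<in> S \<and> x * y \<in> S) \<and>
     (\<forall>x\<in>S. x \<noteq> 0 \<longrightarrow> inverse x \<in> S)"

definition splitting_field :: "rat poly \<Rightarrow> complex set" where
  "splitting_field p = \<Inter>{S. is_subfield S \<and> croots p \<subseteq> S}"

text \<open>Galois group of p over Q: field automorphisms of the splitting field
  (extended by the identity outside it, so that they are unique as HOL functions).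
  Automorphisms automatically fix Q.\<close>
definition galois_group :: "rat poly \<Rightarrow> (complex \<Rightarrow> complex) set" where
  "galois_group p = {\<sigma>. bij_betw \<sigma> (splitting_field p) (splitting_field p) \<and>
      (\<forall>x\<in>splitting_field p. \<forall>y\<in>splitting_field p.
          \<sigma> (x + y) = \<sigma> x + \<sigma> y \<and> \<sigma> (x * y) = \<sigma> x * \<sigma> y) \<and>
      (\<forall>x. x \<notin> splitting_field p \<longrightarrow> \<sigma> x = x)}"

definition perm4 :: "nat list \<Rightarrow> nat \<Rightarrow> nat" where
  "perm4 l = (\<lambda>i. if i < 4 then l ! i else i)"

definition klein4 :: "(nat \<Rightarrow> nat) set" where
  "klein4 = {perm4 [0,1,2,3], perm4 [1,0,3,2], perm4 [2,3,0,1], perm4 [3,2,1,0]}"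

text \<open>Gal(p) is 4T2: p has exactly four complex roots, and the permutation group
  induced by Gal(p) on them is conjugate (via a labelling of the roots by 0..3)
  to V4 in S4.\<close>
definition is_4T2 :: "rat poly \<Rightarrow> bool" where
  "is_4T2 p \<longleftrightarrow> card (croots p) = 4 \<and>
     (\<exists>\<phi>. bij_betw \<phi> {0..<4} (croots p) \<and>
        {restrict \<sigma> (croots p) | \<sigma>. \<sigma> \<in> galois_group p} =
        {restrict (\<phi> \<circ> \<pi> \<circ> the_inv_into {0..<4} \<phi>) (croots p) | \<pi>. \<pi> \<in> klein4})"

definition disc :: "rat poly \<Rightarrow> complex" where
  "disc p = (let rs = (SOME rs. map_poly of_rat p =
                   smult (of_rat (lead_coeff p)) (\<Prod>r\<leftarrow>rs. [:-r, 1:]));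
                 n = length rs
             in of_rat (lead_coeff p) ^ (2 * n - 2) *
                (\<Prod>i<n. \<Prod>j\<in>{i<..<n}. (rs ! i - rs ! j) ^ 2))"

end

(*
  Let t1, t2 be the roots of y^2 + a y + b. The roots of f = x^12 + a x^6 + b are the sixth roots
  of t1 and t2, those of g6 their cube roots, and those of g4 are +-alpha, +-beta with
  alpha^2 = t1, beta^2 = t2.

  The splitting field of f is generated over that of g4 by a primitive cube root of unity and
  cube roots c1, c2 of alpha, beta, so every automorphism of g4 has at most 2 * 3 * 3 extensions;
  over the splitting field of g6 it is generated by the square roots c1, c2 of two roots of g6,
  which allows at most 2 * 2 extensions.

  Computing disc f as the product of f' over the roots gives 6^12 b^5 (4b - a^2)^6, a square iff
  b is, i.e. iff alpha beta (whose square is b) is rational. An element of V4 acts on +-alpha,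
  +-beta as an involution without fixed points unless it is the identity, hence fixes
  alpha beta; if beta is not in Q(alpha), the automorphism negating beta negates alpha beta, and
  otherwise Q(alpha) is the splitting field, whose invariant elements are rational. Conversely,
  if alpha beta is rational then Q(alpha) is the splitting field, and the automorphisms sending
  alpha to each of the four roots act as V4.
*)

theory Submission
  imports Defs "HOL-Computational_Algebra.Field_as_Ring"
begin

definition ceval :: "rat poly \<Rightarrow> complex \<Rightarrow> complex" where
  "ceval p x = poly (map_poly of_rat p) x"

lemma map_poly_of_rat_add:
  "map_poly (of_rat :: rat \<Rightarrow> 'a::field_char_0) (p + q) = map_poly of_rat p + map_poly of_rat q"
  by (rule poly_eqI) (simp add: coeff_map_poly of_rat_add)

lemma map_poly_of_rat_diff:
  "map_poly (of_rat :: rat \<Rightarrow> 'a::field_char_0) (p - q) = map_poly of_rat p - map_poly of_rat q"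
  by (rule poly_eqI) (simp add: coeff_map_poly of_rat_diff)

lemma map_poly_of_rat_mult:
  "map_poly (of_rat :: rat \<Rightarrow> 'a::field_char_0) (p * q) = map_poly of_rat p * map_poly of_rat q"
  by (rule poly_eqI) (simp add: coeff_map_poly coeff_mult of_rat_sum of_rat_mult)

lemma ceval_add [simp]: "ceval (p + q) x = ceval p x + ceval q x"
  by (simp add: ceval_def map_poly_of_rat_add)

lemma ceval_diff [simp]: "ceval (p - q) x = ceval p x - ceval q x"
  by (simp add: ceval_def map_poly_of_rat_diff)

lemma ceval_mult [simp]: "ceval (p * q) x = ceval p x * ceval q x"
  by (simp add: ceval_def map_poly_of_rat_mult)

lemma ceval_0 [simp]: "ceval 0 x = 0"
  by (simp add: ceval_def)

lemma ceval_1 [simp]: "ceval 1 x = 1"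
  by (simp add: ceval_def)

lemma ceval_pCons: "ceval (pCons c p) x = of_rat c + x * ceval p x"
  by (cases "p = 0 \<and> c = 0") (auto simp: ceval_def map_poly_pCons)

lemma ceval_const [simp]: "ceval [:c:] x = of_rat c"
  by (simp add: ceval_pCons)

lemma ceval_X [simp]: "ceval [:0, 1:] x = x"
  by (simp add: ceval_pCons)

lemma ceval_monom [simp]: "ceval (monom c n) x = of_rat c * x ^ n"
  by (simp add: ceval_def map_poly_monom poly_monom)

lemma ceval_mod:
  assumes "ceval g x = 0"
  shows "ceval (p mod g) x = ceval p x"
proof -
  have "ceval p x = ceval (p div g) x * ceval g x + ceval (p mod g) x"
    by (metis ceval_add ceval_mult div_mult_mod_eq)
  with assms show ?thesis by simp
qed

lemma ceval_dvd_eq_0: "g dvd p \<Longrightarrow> ceval g x = 0 \<Longrightarrow> ceval p x = 0"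
  by (auto elim!: dvdE)

lemma croots_ceval: "croots p = {z. ceval p z = 0}"
  by (simp add: croots_def ceval_def)

lemma finite_croots: "p \<noteq> 0 \<Longrightarrow> finite (croots p)"
  unfolding croots_def by (rule poly_roots_finite) (simp add: map_poly_eq_0_iff)

lemma subfield_0: "is_subfield S \<Longrightarrow> 0 \<in> S"
  unfolding is_subfield_def by blast

lemma subfield_1: "is_subfield S \<Longrightarrow> 1 \<in> S"
  unfolding is_subfield_def by blast

lemma subfield_add: "is_subfield S \<Longrightarrow> x \<in> S \<Longrightarrow> y \<in> S \<Longrightarrow> x + y \<in> S"
  unfolding is_subfield_def by blast

lemma subfield_diff: "is_subfield S \<Longrightarrow> x \<in> S \<Longrightarrow> y \<in> S \<Longrightarrow> x - y \<in> S"
  unfolding is_subfield_def by blast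

lemma subfield_mult: "is_subfield S \<Longrightarrow> x \<in> S \<Longrightarrow> y \<in> S \<Longrightarrow> x * y \<in> S"
  unfolding is_subfield_def by blast

lemma subfield_minus: "is_subfield S \<Longrightarrow> x \<in> S \<Longrightarrow> - x \<in> S"
  unfolding is_subfield_def by (metis diff_0)

lemma subfield_inverse: "is_subfield S \<Longrightarrow> x \<in> S \<Longrightarrow> inverse x \<in> S"
  unfolding is_subfield_def by (metis inverse_zero)

lemma subfield_divide: "is_subfield S \<Longrightarrow> x \<in> S \<Longrightarrow> y \<in> S \<Longrightarrow> x / y \<in> S"
  by (simp add: divide_inverse subfield_mult subfield_inverse)

lemma subfield_power: "is_subfield S \<Longrightarrow> x \<in> S \<Longrightarrow> x ^ n \<in> S"
  by (induction n) (simp_all add: subfield_1 subfield_mult)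

lemma subfield_of_nat: "is_subfield S \<Longrightarrow> of_nat n \<in> S"
  by (induction n) (simp_all add: subfield_0 subfield_1 subfield_add)

lemma subfield_of_int: "is_subfield S \<Longrightarrow> of_int n \<in> S"
  by (cases n rule: int_cases2) (simp_all add: subfield_of_nat subfield_minus)

lemma subfield_of_rat: "is_subfield S \<Longrightarrow> of_rat q \<in> S"
  by (cases q) (simp add: of_rat_rat subfield_divide subfield_of_int)

lemma subfield_ceval: "is_subfield S \<Longrightarrow> x \<in> S \<Longrightarrow> ceval p x \<in> S"
  by (induction p) (simp_all add: ceval_pCons subfield_add subfield_mult subfield_of_rat subfield_0)

lemma subfield_Inter: "\<forall>S\<in>F. is_subfield S \<Longrightarrow> is_subfield (\<Inter>F)"
  unfolding is_subfield_def by blast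

lemma subfield_splitting_field: "is_subfield (splitting_field p)"
  unfolding splitting_field_def by (rule subfield_Inter) blast

lemma croots_subset_splitting_field: "croots p \<subseteq> splitting_field p"
  unfolding splitting_field_def by blast

lemma splitting_field_least: "is_subfield S \<Longrightarrow> croots p \<subseteq> S \<Longrightarrow> splitting_field p \<subseteq> S"
  unfolding splitting_field_def by blast

definition field_hom_on :: "complex set \<Rightarrow> (complex \<Rightarrow> complex) \<Rightarrow> bool" where
  "field_hom_on S \<sigma> \<longleftrightarrow> is_subfield S \<and> inj_on \<sigma> S \<and>
     (\<forall>x\<in>S. \<forall>y\<in>S. \<sigma> (x + y) = \<sigma> x + \<sigma> y \<and> \<sigma> (x * y) = \<sigma> x * \<sigma> y)"

context
  fixes S \<sigma> assumes hom: "field_hom_on S \<sigma>"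
begin

lemma field_hom_on_subfield: "is_subfield S"
  using hom by (simp add: field_hom_on_def)

lemma field_hom_on_inj: "inj_on \<sigma> S"
  using hom by (simp add: field_hom_on_def)

lemma field_hom_on_add: "x \<in> S \<Longrightarrow> y \<in> S \<Longrightarrow> \<sigma> (x + y) = \<sigma> x + \<sigma> y"
  using hom by (simp add: field_hom_on_def)

lemma field_hom_on_mult: "x \<in> S \<Longrightarrow> y \<in> S \<Longrightarrow> \<sigma> (x * y) = \<sigma> x * \<sigma> y"
  using hom by (simp add: field_hom_on_def)

lemma field_hom_on_0: "\<sigma> 0 = 0"
  using field_hom_on_add[of 0 0] subfield_0[OF field_hom_on_subfield] by simp

lemma field_hom_on_1: "\<sigma> 1 = 1"
proof -
  have S: "0 \<in> S" "1 \<in> S"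
    using field_hom_on_subfield subfield_0 subfield_1 by auto
  then have "\<sigma> 1 \<noteq> 0"
    using field_hom_on_inj field_hom_on_0 by (metis inj_on_contraD zero_neq_one)
  moreover have "\<sigma> 1 * 1 = \<sigma> 1 * \<sigma> 1"
    using field_hom_on_mult[of 1 1] S by simp
  ultimately show ?thesis
    by (metis mult_left_cancel)
qed

lemma field_hom_on_minus: "x \<in> S \<Longrightarrow> \<sigma> (- x) = - \<sigma> x"
  using field_hom_on_add[of x "- x"] subfield_minus[OF field_hom_on_subfield]
  by (simp add: field_hom_on_0 eq_neg_iff_add_eq_0 add.commute)

lemma field_hom_on_diff: "x \<in> S \<Longrightarrow> y \<in> S \<Longrightarrow> \<sigma> (x - y) = \<sigma> x - \<sigma> y"
  using field_hom_on_add[of x "- y"] field_hom_on_minus[of y]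
    subfield_minus[OF field_hom_on_subfield] by simp

lemma field_hom_on_inverse: "x \<in> S \<Longrightarrow> \<sigma> (inverse x) = inverse (\<sigma> x)"
proof (cases "x = 0")
  case False
  assume x: "x \<in> S"
  have "\<sigma> x * \<sigma> (inverse x) = 1"
    using field_hom_on_mult[OF x subfield_inverse[OF field_hom_on_subfield x]] False
    by (simp add: field_hom_on_1)
  then show ?thesis
    by (metis inverse_unique)
qed (simp add: field_hom_on_0)

lemma field_hom_on_divide: "x \<in> S \<Longrightarrow> y \<in> S \<Longrightarrow> \<sigma> (x / y) = \<sigma> x / \<sigma> y"
  by (simp add: divide_inverse field_hom_on_mult field_hom_on_inverse
      subfield_inverse[OF field_hom_on_subfield])

lemma field_hom_on_power: "x \<in> S \<Longrightarrow> \<sigma> (x ^ n) = \<sigma> x ^ n"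
  by (induction n) (simp_all add: field_hom_on_1 field_hom_on_mult
      subfield_power[OF field_hom_on_subfield])

lemma field_hom_on_of_nat: "\<sigma> (of_nat n) = of_nat n"
  by (induction n) (simp_all add: field_hom_on_0 field_hom_on_1 field_hom_on_add
      subfield_of_nat[OF field_hom_on_subfield] subfield_1[OF field_hom_on_subfield])

lemma field_hom_on_of_int: "\<sigma> (of_int n) = of_int n"
  by (cases n rule: int_cases2)
    (simp_all add: field_hom_on_of_nat field_hom_on_minus subfield_of_nat[OF field_hom_on_subfield])

lemma field_hom_on_of_rat: "\<sigma> (of_rat q) = of_rat q"
  by (cases q) (simp add: of_rat_rat field_hom_on_divide field_hom_on_of_int
      subfield_of_int[OF field_hom_on_subfield])

lemma field_hom_on_ceval: "x \<in> S \<Longrightarrow> \<sigma> (ceval p x) = ceval p (\<sigma> x)"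
proof (induction p)
  case (pCons c p)
  then show ?case
    using subfield_ceval[OF field_hom_on_subfield] subfield_of_rat[OF field_hom_on_subfield]
    by (simp add: ceval_pCons field_hom_on_add field_hom_on_mult field_hom_on_of_rat
        subfield_mult[OF field_hom_on_subfield])
qed (simp add: field_hom_on_0)

lemma field_hom_on_croots: "croots p \<subseteq> S \<Longrightarrow> z \<in> croots p \<Longrightarrow> \<sigma> z \<in> croots p"
  using field_hom_on_ceval[of z p] by (auto simp: croots_ceval field_hom_on_0)

lemma subfield_field_hom_on_image: "is_subfield (\<sigma> ` S)"
proof -
  have S: "is_subfield S"
    by (rule field_hom_on_subfield)
  show ?thesis
    unfolding is_subfield_def
  proof (intro conjI ballI impI)
    show "0 \<in> \<sigma> ` S" "1 \<in> \<sigma> ` S"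
      using field_hom_on_0 field_hom_on_1 subfield_0[OF S] subfield_1[OF S] by force+
  next
    fix u v assume "u \<in> \<sigma> ` S" "v \<in> \<sigma> ` S"
    then obtain x y where xy: "x \<in> S" "y \<in> S" "u = \<sigma> x" "v = \<sigma> y"
      by blast
    show "u + v \<in> \<sigma> ` S"
      using xy field_hom_on_add subfield_add[OF S] by (metis image_eqI)
    show "u - v \<in> \<sigma> ` S"
      using xy field_hom_on_diff subfield_diff[OF S] by (metis image_eqI)
    show "u * v \<in> \<sigma> ` S"
      using xy field_hom_on_mult subfield_mult[OF S] by (metis image_eqI)
  next
    fix u assume "u \<in> \<sigma> ` S"
    then obtain x where "x \<in> S" "u = \<sigma> x"
      by blast
    then show "inverse u \<in> \<sigma> ` S"
      using field_hom_on_inverse subfield_inverse[OF S] by (metis image_eqI)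
  qed
qed

lemma subfield_field_hom_on_preimage:
  assumes "is_subfield T"
  shows "is_subfield {x \<in> S. \<sigma> x \<in> T}"
  unfolding is_subfield_def using field_hom_on_subfield assms
  by (auto simp: field_hom_on_0 field_hom_on_1 field_hom_on_add field_hom_on_diff
      field_hom_on_mult field_hom_on_inverse subfield_0 subfield_1 subfield_add subfield_diff
      subfield_mult subfield_inverse)

end

lemma field_hom_on_subset:
  "field_hom_on S \<sigma> \<Longrightarrow> is_subfield T \<Longrightarrow> T \<subseteq> S \<Longrightarrow> field_hom_on T \<sigma>"
  unfolding field_hom_on_def by (meson inj_on_subset subsetD)

lemma subfield_field_hom_on_equalizer:
  assumes "field_hom_on S \<sigma>1" "field_hom_on S \<sigma>2"
  shows "is_subfield {x \<in> S. \<sigma>1 x = \<sigma>2 x}"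
  unfolding is_subfield_def using assms field_hom_on_subfield[OF assms(1)]
  by (auto simp: field_hom_on_0 field_hom_on_1 field_hom_on_add field_hom_on_diff
      field_hom_on_mult field_hom_on_inverse subfield_0 subfield_1 subfield_add subfield_diff
      subfield_mult subfield_inverse)

lemma galois_group_field_hom_on: "\<sigma> \<in> galois_group p \<Longrightarrow> field_hom_on (splitting_field p) \<sigma>"
  unfolding galois_group_def field_hom_on_def
  using subfield_splitting_field bij_betw_imp_inj_on by blast

lemma galois_group_id_outside: "\<sigma> \<in> galois_group p \<Longrightarrow> x \<notin> splitting_field p \<Longrightarrow> \<sigma> x = x"
  unfolding galois_group_def by blast

lemma galois_group_croots: "\<sigma> \<in> galois_group p \<Longrightarrow> z \<in> croots p \<Longrightarrow> \<sigma> z \<in> croots p"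
  using field_hom_on_croots[OF galois_group_field_hom_on croots_subset_splitting_field] by blast

lemma galois_group_eqI:
  assumes "\<sigma>1 \<in> galois_group p" "\<sigma>2 \<in> galois_group p"
    and "croots p \<subseteq> {x \<in> splitting_field p. \<sigma>1 x = \<sigma>2 x}"
  shows "\<sigma>1 = \<sigma>2"
proof
  fix x
  have "splitting_field p \<subseteq> {x \<in> splitting_field p. \<sigma>1 x = \<sigma>2 x}"
    using subfield_field_hom_on_equalizer[OF galois_group_field_hom_on galois_group_field_hom_on]
      assms splitting_field_least by blast
  then show "\<sigma>1 x = \<sigma>2 x"
    using galois_group_id_outside[OF assms(1)] galois_group_id_outside[OF assms(2)]
    by (cases "x \<in> splitting_field p") auto
qed

text \<open>Injectivity of an endomorphism of the finite root set makes it onto the roots, hence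
  onto the splitting field they generate.\<close>
lemma galois_groupI:
  assumes p: "p \<noteq> 0" and hom: "field_hom_on (splitting_field p) \<sigma>"
    and into: "\<sigma> ` splitting_field p \<subseteq> splitting_field p"
  shows "(\<lambda>x. if x \<in> splitting_field p then \<sigma> x else x) \<in> galois_group p"
proof -
  let ?S = "splitting_field p" and ?R = "croots p"
  have "\<sigma> ` ?R \<subseteq> ?R"
    using field_hom_on_croots[OF hom croots_subset_splitting_field] by blast
  moreover have "inj_on \<sigma> ?R"
    using field_hom_on_inj[OF hom] croots_subset_splitting_field[of p] by (rule inj_on_subset)
  ultimately have "\<sigma> ` ?R = ?R"
    by (rule endo_inj_surj[OF finite_croots[OF p]])
  then have "?S \<subseteq> \<sigma> ` ?S"
    using splitting_field_least[OF subfield_field_hom_on_image[OF hom], of p]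
      croots_subset_splitting_field[of p] by (metis image_mono)
  with into have onto: "\<sigma> ` ?S = ?S"
    by blast
  let ?\<tau> = "\<lambda>x. if x \<in> ?S then \<sigma> x else x"
  have "bij_betw ?\<tau> ?S ?S"
    using onto field_hom_on_inj[OF hom] by (auto simp: bij_betw_def inj_on_def image_def)
  moreover have "\<forall>x\<in>?S. \<forall>y\<in>?S. ?\<tau> (x + y) = ?\<tau> x + ?\<tau> y \<and> ?\<tau> (x * y) = ?\<tau> x * ?\<tau> y"
    using field_hom_on_add[OF hom] field_hom_on_mult[OF hom]
      subfield_add[OF subfield_splitting_field] subfield_mult[OF subfield_splitting_field] by auto
  ultimately show ?thesis
    unfolding galois_group_def by auto
qed

lemma galois_group_restrict:
  assumes \<sigma>: "\<sigma> \<in> galois_group p" and q: "q \<noteq> 0" and sub: "croots q \<subseteq> splitting_field p"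
  shows "\<exists>\<tau>\<in>galois_group q. \<forall>x\<in>splitting_field q. \<tau> x = \<sigma> x"
proof -
  let ?Sp = "splitting_field p" and ?Sq = "splitting_field q"
  have hom: "field_hom_on ?Sp \<sigma>"
    by (rule galois_group_field_hom_on[OF \<sigma>])
  have "?Sq \<subseteq> ?Sp"
    by (rule splitting_field_least[OF subfield_splitting_field sub])
  then have hom_q: "field_hom_on ?Sq \<sigma>"
    by (rule field_hom_on_subset[OF hom subfield_splitting_field])
  have "croots q \<subseteq> {x \<in> ?Sp. \<sigma> x \<in> ?Sq}"
    using sub field_hom_on_croots[OF hom sub] croots_subset_splitting_field[of q] by blast
  then have "?Sq \<subseteq> {x \<in> ?Sp. \<sigma> x \<in> ?Sq}"
    by (rule splitting_field_least[OF subfield_field_hom_on_preimage[OF hom subfield_splitting_field]])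
  then have "\<sigma> ` ?Sq \<subseteq> ?Sq"
    by blast
  then have "(\<lambda>x. if x \<in> ?Sq then \<sigma> x else x) \<in> galois_group q"
    by (rule galois_groupI[OF q hom_q])
  then show ?thesis
    by (rule bexI[rotated]) simp
qed

lemma inj_on_restrict_galois_group: "inj_on (\<lambda>\<sigma>. restrict \<sigma> (croots q)) (galois_group q)"
proof (rule inj_onI)
  fix \<sigma>1 \<sigma>2
  assume \<sigma>: "\<sigma>1 \<in> galois_group q" "\<sigma>2 \<in> galois_group q"
    and "restrict \<sigma>1 (croots q) = restrict \<sigma>2 (croots q)"
  then have "\<forall>x\<in>croots q. \<sigma>1 x = \<sigma>2 x"
    by (metis restrict_apply')
  then show "\<sigma>1 = \<sigma>2"
    using galois_group_eqI[OF \<sigma>] croots_subset_splitting_field by blast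
qed

lemma finite_galois_group:
  assumes q: "q \<noteq> 0"
  shows "finite (galois_group q)"
proof -
  have "(\<lambda>\<sigma>. restrict \<sigma> (croots q)) ` galois_group q \<subseteq> croots q \<rightarrow>\<^sub>E croots q"
    using galois_group_croots by auto
  moreover have "finite (croots q \<rightarrow>\<^sub>E croots q)"
    using finite_croots[OF q] by (simp add: finite_PiE)
  ultimately have "finite ((\<lambda>\<sigma>. restrict \<sigma> (croots q)) ` galois_group q)"
    by (rule finite_subset)
  then show ?thesis
    using inj_on_restrict_galois_group finite_image_iff by blast
qed

lemma card_galois_group_le_mult:
  assumes q: "q \<noteq> 0" and sub: "croots q \<subseteq> splitting_field p"
    and determined: "\<And>\<sigma>1 \<sigma>2. \<sigma>1 \<in> galois_group p \<Longrightarrow> \<sigma>2 \<in> galois_group p \<Longrightarrow>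
        \<forall>x\<in>croots q. \<sigma>1 x = \<sigma>2 x \<Longrightarrow> h \<sigma>1 = h \<sigma>2 \<Longrightarrow> \<sigma>1 = \<sigma>2"
    and datum: "\<And>\<sigma>. \<sigma> \<in> galois_group p \<Longrightarrow> h \<sigma> \<in> X (restrict \<sigma> (croots q))"
    and finite: "\<And>\<rho>. finite (X \<rho>)" and card: "\<And>\<rho>. card (X \<rho>) \<le> k"
  shows "card (galois_group p) \<le> k * card (galois_group q)"
proof -
  let ?r = "\<lambda>\<sigma>. restrict \<sigma> (croots q)"
  let ?Res = "?r ` galois_group q"
  have fin_Res: "finite ?Res"
    using finite_galois_group[OF q] by simp
  have "inj_on (\<lambda>\<sigma>. (?r \<sigma>, h \<sigma>)) (galois_group p)"
  proof (rule inj_onI)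
    fix \<sigma>1 \<sigma>2 assume "\<sigma>1 \<in> galois_group p" "\<sigma>2 \<in> galois_group p"
      and eq: "(?r \<sigma>1, h \<sigma>1) = (?r \<sigma>2, h \<sigma>2)"
    moreover from eq have "\<forall>x\<in>croots q. \<sigma>1 x = \<sigma>2 x"
      by (metis prod.inject restrict_apply')
    ultimately show "\<sigma>1 = \<sigma>2"
      using determined by simp
  qed
  moreover have "(\<lambda>\<sigma>. (?r \<sigma>, h \<sigma>)) ` galois_group p \<subseteq> Sigma ?Res X"
  proof (rule image_subsetI)
    fix \<sigma> assume \<sigma>: "\<sigma> \<in> galois_group p"
    obtain \<tau> where \<tau>: "\<tau> \<in> galois_group q" "\<forall>x\<in>splitting_field q. \<tau> x = \<sigma> x"
      using galois_group_restrict[OF \<sigma> q sub] by blast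
    then have "?r \<sigma> = ?r \<tau>"
      using croots_subset_splitting_field[of q] by (intro restrict_ext) (metis subsetD)
    with \<tau>(1) datum[OF \<sigma>] show "(?r \<sigma>, h \<sigma>) \<in> Sigma ?Res X"
      by auto
  qed
  ultimately have "card (galois_group p) \<le> card (Sigma ?Res X)"
    using fin_Res finite by (intro card_inj_on_le) auto
  also have "\<dots> = (\<Sum>\<rho>\<in>?Res. card (X \<rho>))"
    using fin_Res finite by simp
  also have "\<dots> \<le> k * card ?Res"
    using sum_bounded_above[of ?Res "\<lambda>\<rho>. card (X \<rho>)" k] card by (simp add: mult.commute)
  also have "\<dots> \<le> k * card (galois_group q)"
    by (intro mult_le_mono2 card_image_le finite_galois_group[OF q])
  finally show ?thesis .
qed

section \<open>Simple algebraic extensions\<close>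

definition simple_extension :: "complex \<Rightarrow> complex set" where
  "simple_extension x = {ceval p x | p. True}"

lemma irreducible_bezout:
  fixes g p :: "rat poly"
  assumes "irreducible g" "\<not> g dvd p"
  shows "\<exists>u v. u * g + v * p = 1"
proof -
  have "prime_elem g"
    using assms(1) by (rule irreducible_imp_prime_elem)
  then have "coprime g p"
    using assms(2) by (rule prime_elem_imp_coprime)
  then have "gcd g p = 1"
    by simp
  then show ?thesis
    using bezout_coefficients_fst_snd by metis
qed

lemma irreducible_dvd_if_ceval_eq_0:
  assumes "irreducible g" "ceval g x = 0" "ceval p x = 0"
  shows "g dvd p"
proof (rule ccontr)
  assume "\<not> g dvd p"
  then obtain u v where "u * g + v * p = 1"
    using irreducible_bezout assms(1) by blast
  then have "ceval (u * g + v * p) x = 1"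
    by simp
  with assms(2,3) show False
    by simp
qed

lemma ceval_eq_iff_conjugate:
  assumes g: "irreducible g" and x: "ceval g x = 0" and x': "ceval g x' = 0"
  shows "ceval p x = ceval q x \<longleftrightarrow> ceval p x' = ceval q x'"
proof -
  have "ceval p y = ceval q y \<longleftrightarrow> g dvd p - q" if "ceval g y = 0" for y
    using irreducible_dvd_if_ceval_eq_0[OF g that, of "p - q"] ceval_dvd_eq_0[OF _ that, of "p - q"]
    by auto
  then show ?thesis
    using x x' by blast
qed

lemma subfield_simple_extension:
  assumes g: "irreducible g" and x: "ceval g x = 0"
  shows "is_subfield (simple_extension x)"
  unfolding is_subfield_def
proof (intro conjI ballI impI)
  show "0 \<in> simple_extension x" "1 \<in> simple_extension x"
    unfolding simple_extension_def by (metis (mono_tags) ceval_0 ceval_1 mem_Collect_eq)+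
next
  fix y z assume "y \<in> simple_extension x" "z \<in> simple_extension x"
  then obtain p q where pq: "y = ceval p x" "z = ceval q x"
    unfolding simple_extension_def by blast
  show "y + z \<in> simple_extension x" "y - z \<in> simple_extension x" "y * z \<in> simple_extension x"
    unfolding simple_extension_def pq by (metis (mono_tags) ceval_add ceval_diff ceval_mult mem_Collect_eq)+
next
  fix y assume "y \<in> simple_extension x" "y \<noteq> 0"
  then obtain p where p: "y = ceval p x" "\<not> g dvd p"
    unfolding simple_extension_def using ceval_dvd_eq_0 x by blast
  then obtain u v where "u * g + v * p = 1"
    using irreducible_bezout g by blast
  then have "ceval v x * y = 1"
    using x p(1) by (metis ceval_1 ceval_add ceval_mult mult_zero_left add_0 mult.commute)
  then have "inverse y = ceval v x"
    by (metis inverse_unique mult.commute)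
  then show "inverse y \<in> simple_extension x"
    unfolding simple_extension_def by blast
qed

lemma simple_extension_least: "is_subfield S \<Longrightarrow> x \<in> S \<Longrightarrow> simple_extension x \<subseteq> S"
  unfolding simple_extension_def using subfield_ceval by blast

lemma simple_extension_self: "x \<in> simple_extension x"
  unfolding simple_extension_def by (metis (mono_tags) ceval_X mem_Collect_eq)

lemma of_rat_in_simple_extension: "of_rat q \<in> simple_extension x"
  unfolding simple_extension_def by (metis (mono_tags) ceval_const mem_Collect_eq)

lemma splitting_field_eq_simple_extension:
  assumes g: "irreducible g" and x: "x \<in> croots g" and R: "croots g \<subseteq> simple_extension x"
  shows "splitting_field g = simple_extension x"
proof
  show "splitting_field g \<subseteq> simple_extension x"
    using splitting_field_least[OF subfield_simple_extension[OF g] R] x by (simp add: croots_ceval)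
  show "simple_extension x \<subseteq> splitting_field g"
    using simple_extension_least[OF subfield_splitting_field] x croots_subset_splitting_field by blast
qed

text \<open>When a root generates the splitting field, substituting any other root for it is an
  automorphism; well-definedness is the fact that both roots have the same minimal polynomial.\<close>
lemma galois_group_transitive:
  assumes g: "irreducible g" and x: "x \<in> croots g" and R: "croots g \<subseteq> simple_extension x"
    and x': "x' \<in> croots g"
  shows "\<exists>\<sigma>\<in>galois_group g. \<forall>p. \<sigma> (ceval p x) = ceval p x'"
proof -
  have gx: "ceval g x = 0" and gx': "ceval g x' = 0"
    using x x' by (auto simp: croots_ceval)
  have SF: "splitting_field g = simple_extension x"
    by (rule splitting_field_eq_simple_extension[OF g x R])
  define \<sigma> where "\<sigma> y = ceval (SOME p. y = ceval p x) x'" for y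
  have \<sigma>: "\<sigma> (ceval p x) = ceval p x'" for p
  proof -
    have "ceval p x = ceval (SOME q. ceval p x = ceval q x) x"
      by (rule someI_ex) blast
    then show ?thesis
      unfolding \<sigma>_def using ceval_eq_iff_conjugate[OF g gx gx'] by metis
  qed
  have "field_hom_on (simple_extension x) \<sigma>"
    unfolding field_hom_on_def
  proof (intro conjI ballI)
    show "is_subfield (simple_extension x)"
      by (rule subfield_simple_extension[OF g gx])
    show "inj_on \<sigma> (simple_extension x)"
      unfolding simple_extension_def
      using ceval_eq_iff_conjugate[OF g gx gx'] by (auto simp: inj_on_def \<sigma>)
  next
    fix y z assume "y \<in> simple_extension x" "z \<in> simple_extension x"
    then obtain p q where pq: "y = ceval p x" "z = ceval q x"
      unfolding simple_extension_def by blast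
    show "\<sigma> (y + z) = \<sigma> y + \<sigma> z" "\<sigma> (y * z) = \<sigma> y * \<sigma> z"
      unfolding pq by (metis \<sigma> ceval_add ceval_mult)+
  qed
  moreover have "\<sigma> ` simple_extension x \<subseteq> simple_extension x"
  proof
    fix w assume "w \<in> \<sigma> ` simple_extension x"
    then obtain p where "w = ceval p x'"
      unfolding simple_extension_def using \<sigma> by auto
    then show "w \<in> simple_extension x"
      using subfield_ceval[OF subfield_simple_extension[OF g gx]] R x' by blast
  qed
  ultimately have "(\<lambda>y. if y \<in> splitting_field g then \<sigma> y else y) \<in> galois_group g"
    using galois_groupI[of g \<sigma>] g unfolding SF by (metis not_irreducible_zero)
  moreover have "ceval p x \<in> splitting_field g" for p
    unfolding SF simple_extension_def by blast
  ultimately show ?thesis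
    using \<sigma> by (intro bexI[of _ "\<lambda>y. if y \<in> splitting_field g then \<sigma> y else y"]) auto
qed

text \<open>The Galois-invariant elements of a field generated by a root are rational: reducing a
  representing polynomial modulo the minimal polynomial gives one of degree below the number
  of roots that takes the same value at all of them.\<close>
lemma rational_if_galois_invariant:
  assumes g: "irreducible g" and x: "x \<in> croots g" and R: "croots g \<subseteq> simple_extension x"
    and deg: "degree g \<le> card (croots g)"
    and y: "y \<in> simple_extension x" and inv: "\<forall>\<sigma>\<in>galois_group g. \<sigma> y = y"
  shows "y \<in> \<rat>"
proof -
  obtain p where p: "y = ceval p x"
    using y unfolding simple_extension_def by blast
  define r where "r = p mod g"
  have g0: "g \<noteq> 0"
    using g by auto
  have r_val: "ceval r x' = y" if x': "x' \<in> croots g" for x'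
  proof -
    obtain \<sigma> where "\<sigma> \<in> galois_group g" "\<forall>q. \<sigma> (ceval q x) = ceval q x'"
      using galois_group_transitive[OF g x R x'] by blast
    then have "ceval p x' = y"
      using inv p by metis
    then show ?thesis
      using x' unfolding r_def by (simp add: ceval_mod croots_ceval)
  qed
  define P where "P = map_poly (of_rat :: rat \<Rightarrow> complex) r - [:y:]"
  have "P = 0"
  proof (rule ccontr)
    assume P0: "P \<noteq> 0"
    have "degree r < degree g"
      using degree_mod_less[OF g0, of p] g0 irreducible_not_unit[OF g] is_unit_iff_degree[OF g0]
      unfolding r_def by (cases "p mod g = 0") auto
    then have "degree P < degree g"
      unfolding P_def using degree_diff_le[of "map_poly of_rat r" "degree r" "[:y:]"]
      by (simp add: degree_map_poly)
    moreover have "croots g \<subseteq> {z. poly P z = 0}"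
      using r_val by (auto simp: P_def ceval_def)
    then have "card (croots g) \<le> card {z. poly P z = 0}"
      by (rule card_mono[OF poly_roots_finite[OF P0]])
    ultimately show False
      using card_poly_roots_bound[OF P0] deg by linarith
  qed
  then have "coeff (map_poly of_rat r) 0 = y"
    unfolding P_def by simp
  then show ?thesis
    by (metis coeff_map_poly of_rat_0 Rats_of_rat)
qed

section \<open>Quadratic extensions\<close>

definition quad_extension :: "complex set \<Rightarrow> complex \<Rightarrow> complex set" where
  "quad_extension F \<beta> = {u + v * \<beta> | u v. u \<in> F \<and> v \<in> F}"

context
  fixes F \<beta>
  assumes F: "is_subfield F" and notin: "\<beta> \<notin> F" and sq: "\<beta>\<^sup>2 \<in> F"
begin

lemma quad_extension_coords_unique:
  assumes "u \<in> F" "v \<in> F" "u' \<in> F" "v' \<in> F" "u + v * \<beta> = u' + v' * \<beta>"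
  shows "u = u' \<and> v = v'"
proof (cases "v = v'")
  case False
  then have "\<beta> = (u - u') / (v' - v)"
    using assms(5) by (simp add: field_simps)
  then have "\<beta> \<in> F"
    using subfield_divide[OF F] subfield_diff[OF F] assms(1-4) by simp
  with notin show ?thesis
    by simp
qed (use assms in simp)

lemma quad_extension_mult:
  assumes "u \<in> F" "v \<in> F" "u' \<in> F" "v' \<in> F"
  shows "(u + v * \<beta>) * (u' + v' * \<beta>) = (u * u' + v * v' * \<beta>\<^sup>2) + (u * v' + v * u') * \<beta>"
    and "u * u' + v * v' * \<beta>\<^sup>2 \<in> F" "u * v' + v * u' \<in> F"
proof -
  show "(u + v * \<beta>) * (u' + v' * \<beta>) = (u * u' + v * v' * \<beta>\<^sup>2) + (u * v' + v * u') * \<beta>"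
    by (simp add: algebra_simps power2_eq_square)
  show "u * u' + v * v' * \<beta>\<^sup>2 \<in> F" "u * v' + v * u' \<in> F"
    using assms sq subfield_add[OF F] subfield_mult[OF F] by simp_all
qed

lemma subfield_quad_extension: "is_subfield (quad_extension F \<beta>)"
  unfolding is_subfield_def
proof (intro conjI ballI impI)
  show "0 \<in> quad_extension F \<beta>" "1 \<in> quad_extension F \<beta>"
    unfolding quad_extension_def using subfield_0[OF F] subfield_1[OF F] by force+
next
  fix y z assume "y \<in> quad_extension F \<beta>" "z \<in> quad_extension F \<beta>"
  then obtain u v u' v' where uv: "u \<in> F" "v \<in> F" "u' \<in> F" "v' \<in> F"
    and yz: "y = u + v * \<beta>" "z = u' + v' * \<beta>"
    unfolding quad_extension_def by blast
  have "y + z = (u + u') + (v + v') * \<beta>" "y - z = (u - u') + (v - v') * \<beta>"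
    unfolding yz by (simp_all add: algebra_simps)
  then show "y + z \<in> quad_extension F \<beta>" "y - z \<in> quad_extension F \<beta>"
    unfolding quad_extension_def using uv subfield_add[OF F] subfield_diff[OF F] by blast+
  show "y * z \<in> quad_extension F \<beta>"
    unfolding quad_extension_def yz quad_extension_mult(1)[OF uv]
    using quad_extension_mult(2,3)[OF uv] by blast
next
  fix y assume "y \<in> quad_extension F \<beta>" "y \<noteq> 0"
  then obtain u v where uv: "u \<in> F" "v \<in> F" "y = u + v * \<beta>" "y \<noteq> 0"
    unfolding quad_extension_def by blast
  define N where "N = u\<^sup>2 - v\<^sup>2 * \<beta>\<^sup>2"
  have N: "N \<in> F"
    unfolding N_def using uv sq subfield_diff[OF F] subfield_mult[OF F] subfield_power[OF F] by auto
  have Ny: "N = y * (u + (- v) * \<beta>)"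
    unfolding N_def uv(3) by (simp add: algebra_simps power2_eq_square)
  have "u + (- v) * \<beta> \<noteq> 0"
  proof
    assume "u + (- v) * \<beta> = 0"
    then have "u = 0 \<and> - v = 0"
      using quad_extension_coords_unique[OF uv(1) subfield_minus[OF F uv(2)] subfield_0[OF F]
          subfield_0[OF F]] by simp
    with uv(3,4) show False
      by simp
  qed
  then have "N \<noteq> 0"
    using Ny uv(4) by simp
  then have "inverse y = (u + (- v) * \<beta>) / N"
    unfolding Ny by (simp add: field_simps)
  also have "\<dots> = u / N + (- v / N) * \<beta>"
    by (simp add: diff_divide_distrib)
  finally have "inverse y = u / N + (- v / N) * \<beta>" .
  moreover have "u / N \<in> F" "- v / N \<in> F"
    using uv N subfield_divide[OF F] subfield_minus[OF F] by auto
  ultimately show "inverse y \<in> quad_extension F \<beta>"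
    unfolding quad_extension_def by blast
qed

lemma quad_extension_conjugation:
  "\<exists>\<tau>. field_hom_on (quad_extension F \<beta>) \<tau> \<and> \<tau> ` quad_extension F \<beta> \<subseteq> quad_extension F \<beta> \<and>
     (\<forall>u\<in>F. \<forall>v\<in>F. \<tau> (u + v * \<beta>) = u - v * \<beta>)"
proof -
  let ?K = "quad_extension F \<beta>"
  define \<tau> where "\<tau> y = (SOME w. \<exists>u v. u \<in> F \<and> v \<in> F \<and> y = u + v * \<beta> \<and> w = u - v * \<beta>)" for y
  have \<tau>: "\<tau> (u + v * \<beta>) = u - v * \<beta>" if "u \<in> F" "v \<in> F" for u v
  proof -
    have "\<exists>w u' v'. u' \<in> F \<and> v' \<in> F \<and> u + v * \<beta> = u' + v' * \<beta> \<and> w = u' - v' * \<beta>"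
      using that by blast
    from someI_ex[OF this] obtain u' v' where "u' \<in> F" "v' \<in> F" "u + v * \<beta> = u' + v' * \<beta>"
        "\<tau> (u + v * \<beta>) = u' - v' * \<beta>"
      unfolding \<tau>_def by blast
    then show ?thesis
      using quad_extension_coords_unique that by metis
  qed
  have "field_hom_on ?K \<tau>"
    unfolding field_hom_on_def
  proof (intro conjI ballI)
    show "is_subfield ?K"
      by (rule subfield_quad_extension)
    show "inj_on \<tau> ?K"
    proof (rule inj_onI)
      fix y z assume "y \<in> ?K" "z \<in> ?K" "\<tau> y = \<tau> z"
      then obtain u v u' v' where uv: "u \<in> F" "v \<in> F" "u' \<in> F" "v' \<in> F"
        and yz: "y = u + v * \<beta>" "z = u' + v' * \<beta>" and "u + (- v) * \<beta> = u' + (- v') * \<beta>"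
        unfolding quad_extension_def using \<tau> by auto
      then have "u = u' \<and> - v = - v'"
        using quad_extension_coords_unique subfield_minus[OF F] by blast
      then show "y = z"
        using yz by simp
    qed
  next
    fix y z assume "y \<in> ?K" "z \<in> ?K"
    then obtain u v u' v' where uv: "u \<in> F" "v \<in> F" "u' \<in> F" "v' \<in> F"
      and yz: "y = u + v * \<beta>" "z = u' + v' * \<beta>"
      unfolding quad_extension_def by blast
    have ty: "\<tau> y = u - v * \<beta>" and tz: "\<tau> z = u' - v' * \<beta>"
      unfolding yz using \<tau> uv by simp_all
    have "y + z = (u + u') + (v + v') * \<beta>"
      unfolding yz by (simp add: algebra_simps)
    then have "\<tau> (y + z) = (u + u') - (v + v') * \<beta>"
      using \<tau> uv subfield_add[OF F] by simp
    then show "\<tau> (y + z) = \<tau> y + \<tau> z"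
      unfolding ty tz by (simp add: algebra_simps)
    have "\<tau> (y * z) = (u * u' + v * v' * \<beta>\<^sup>2) - (u * v' + v * u') * \<beta>"
      unfolding yz quad_extension_mult(1)[OF uv] using \<tau> quad_extension_mult(2,3)[OF uv] by blast
    then show "\<tau> (y * z) = \<tau> y * \<tau> z"
      unfolding ty tz by (simp add: algebra_simps power2_eq_square)
  qed
  moreover have "\<tau> ` ?K \<subseteq> ?K"
  proof
    fix w assume "w \<in> \<tau> ` ?K"
    then obtain u v where "u \<in> F" "v \<in> F" "w = u + (- v) * \<beta>"
      unfolding quad_extension_def using \<tau> by auto
    then show "w \<in> ?K"
      unfolding quad_extension_def using subfield_minus[OF F] by blast
  qed
  ultimately show ?thesis
    using \<tau> by blast
qed

lemma galois_group_quad_conjugation: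
  assumes "p \<noteq> 0" and SF: "splitting_field p = quad_extension F \<beta>"
  shows "\<exists>\<tau>\<in>galois_group p. (\<forall>u\<in>F. \<tau> u = u) \<and> \<tau> \<beta> = - \<beta>"
proof -
  obtain \<tau> where \<tau>: "field_hom_on (quad_extension F \<beta>) \<tau>"
      "\<tau> ` quad_extension F \<beta> \<subseteq> quad_extension F \<beta>"
      "\<forall>u\<in>F. \<forall>v\<in>F. \<tau> (u + v * \<beta>) = u - v * \<beta>"
    using quad_extension_conjugation by blast
  let ?\<tau> = "\<lambda>x. if x \<in> splitting_field p then \<tau> x else x"
  show ?thesis
  proof (rule bexI[of _ ?\<tau>])
    show "?\<tau> \<in> galois_group p"
      using galois_groupI[OF assms(1)] \<tau>(1,2) unfolding SF by simp
    have "u + 0 * \<beta> \<in> quad_extension F \<beta>" "0 + 1 * \<beta> \<in> quad_extension F \<beta>" if "u \<in> F" for u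
      unfolding quad_extension_def using that subfield_0[OF F] subfield_1[OF F] by blast+
    then show "(\<forall>u\<in>F. ?\<tau> u = u) \<and> ?\<tau> \<beta> = - \<beta>"
      using \<tau>(3) subfield_0[OF F] subfield_1[OF F] unfolding SF
      by (metis add_0 add.right_neutral diff_zero diff_0 mult_1 mult_zero_left)
  qed
qed

end

lemma less_4_cases: "x < 4 \<Longrightarrow> x = 0 \<or> x = 1 \<or> x = 2 \<or> x = (3::nat)"
  by auto

lemma klein4_less_4: "\<pi> \<in> klein4 \<Longrightarrow> x < 4 \<Longrightarrow> \<pi> x < 4"
  unfolding klein4_def perm4_def by (auto dest!: less_4_cases)

lemma klein4_involution: "\<pi> \<in> klein4 \<Longrightarrow> x < 4 \<Longrightarrow> \<pi> (\<pi> x) = x"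
  unfolding klein4_def perm4_def by (auto dest!: less_4_cases)

lemma klein4_fixes_all_if_fixes_one:
  "\<pi> \<in> klein4 \<Longrightarrow> x < 4 \<Longrightarrow> y < 4 \<Longrightarrow> \<pi> x = x \<Longrightarrow> \<pi> y = y"
  unfolding klein4_def perm4_def by (auto dest!: less_4_cases)

lemma klein4_transitive: "j < 4 \<Longrightarrow> \<exists>\<pi>\<in>klein4. \<pi> 0 = j"
  unfolding klein4_def perm4_def by (auto dest!: less_4_cases)

lemma galois_group_action_if_4T2:
  assumes T: "is_4T2 p" and \<sigma>: "\<sigma> \<in> galois_group p" and x: "x \<in> croots p"
  shows "\<sigma> (\<sigma> x) = x" and "\<sigma> x = x \<Longrightarrow> y \<in> croots p \<Longrightarrow> \<sigma> y = y"
proof -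
  let ?R = "croots p"
  obtain \<psi> where bij: "bij_betw \<psi> {0..<4} ?R" and
    eq: "{restrict \<sigma> ?R | \<sigma>. \<sigma> \<in> galois_group p} =
         {restrict (\<psi> \<circ> \<pi> \<circ> the_inv_into {0..<4} \<psi>) ?R | \<pi>. \<pi> \<in> klein4}"
    using T unfolding is_4T2_def by blast
  let ?inv = "the_inv_into {0..<4} \<psi>"
  obtain \<pi> where \<pi>: "\<pi> \<in> klein4" and r: "restrict \<sigma> ?R = restrict (\<psi> \<circ> \<pi> \<circ> ?inv) ?R"
    using eq \<sigma> by blast
  have inv_lt: "?inv z < 4" if "z \<in> ?R" for z
    using bij that by (metis atLeastLessThan_iff bij_betw_def the_inv_into_into subset_refl)
  have \<psi>_inv: "\<psi> (?inv z) = z" if "z \<in> ?R" for z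
    using bij that by (meson f_the_inv_into_f_bij_betw)
  have inv_\<psi>: "?inv (\<psi> i) = i" if "i < 4" for i
    using bij that by (simp add: bij_betw_def the_inv_into_f_f)
  have \<sigma>_eq: "\<sigma> z = \<psi> (\<pi> (?inv z))" if "z \<in> ?R" for z
    using r that by (metis comp_apply restrict_apply')
  show "\<sigma> (\<sigma> x) = x"
    using \<sigma>_eq galois_group_croots[OF \<sigma> x] x inv_\<psi> klein4_less_4[OF \<pi>]
      klein4_involution[OF \<pi>] inv_lt \<psi>_inv by metis
  assume "\<sigma> x = x" and y: "y \<in> ?R"
  then have "\<pi> (?inv x) = ?inv x"
    using x \<sigma>_eq inv_\<psi> klein4_less_4[OF \<pi>] inv_lt by metis
  then have "\<pi> (?inv y) = ?inv y"
    using klein4_fixes_all_if_fixes_one[OF \<pi>] inv_lt x y by blast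
  then show "\<sigma> y = y"
    using y \<sigma>_eq \<psi>_inv by metis
qed

lemma is_4T2I:
  assumes bij: "bij_betw \<phi> {0..<4} (croots p)"
    and gal: "\<And>\<sigma>. \<sigma> \<in> galois_group p \<Longrightarrow> \<exists>\<pi>\<in>klein4. \<forall>i<4. \<sigma> (\<phi> i) = \<phi> (\<pi> i)"
    and klein: "\<And>\<pi>. \<pi> \<in> klein4 \<Longrightarrow> \<exists>\<sigma>\<in>galois_group p. \<forall>i<4. \<sigma> (\<phi> i) = \<phi> (\<pi> i)"
  shows "is_4T2 p"
proof -
  let ?R = "croots p" and ?inv = "the_inv_into {0..<4} \<phi>"
  have "card ?R = 4"
    using bij_betw_same_card[OF bij] by simp
  have restrict_eq: "restrict \<sigma> ?R = restrict (\<phi> \<circ> \<pi> \<circ> ?inv) ?R"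
    if "\<forall>i<4. \<sigma> (\<phi> i) = \<phi> (\<pi> i)" for \<sigma> \<pi>
  proof (rule restrict_ext)
    fix x assume "x \<in> ?R"
    then obtain i where "i < 4" "x = \<phi> i"
      using bij unfolding bij_betw_def by (metis atLeastLessThan_iff imageE)
    then show "\<sigma> x = (\<phi> \<circ> \<pi> \<circ> ?inv) x"
      using that bij by (simp add: bij_betw_def the_inv_into_f_f)
  qed
  have "{restrict \<sigma> ?R | \<sigma>. \<sigma> \<in> galois_group p} = {restrict (\<phi> \<circ> \<pi> \<circ> ?inv) ?R | \<pi>. \<pi> \<in> klein4}"
  proof (intro equalityI subsetI)
    fix y assume "y \<in> {restrict \<sigma> ?R | \<sigma>. \<sigma> \<in> galois_group p}"
    then obtain \<sigma> where \<sigma>: "\<sigma> \<in> galois_group p" "y = restrict \<sigma> ?R"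
      by blast
    obtain \<pi> where \<pi>: "\<pi> \<in> klein4" "\<forall>i<4. \<sigma> (\<phi> i) = \<phi> (\<pi> i)"
      using gal[OF \<sigma>(1)] by blast
    have "y = restrict (\<phi> \<circ> \<pi> \<circ> ?inv) ?R"
      using restrict_eq[OF \<pi>(2)] \<sigma>(2) by simp
    with \<pi>(1) show "y \<in> {restrict (\<phi> \<circ> \<pi> \<circ> ?inv) ?R | \<pi>. \<pi> \<in> klein4}"
      by blast
  next
    fix y assume "y \<in> {restrict (\<phi> \<circ> \<pi> \<circ> ?inv) ?R | \<pi>. \<pi> \<in> klein4}"
    then obtain \<pi> where \<pi>: "\<pi> \<in> klein4" "y = restrict (\<phi> \<circ> \<pi> \<circ> ?inv) ?R"
      by blast
    obtain \<sigma> where \<sigma>: "\<sigma> \<in> galois_group p" "\<forall>i<4. \<sigma> (\<phi> i) = \<phi> (\<pi> i)"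
      using klein[OF \<pi>(1)] by blast
    have "y = restrict \<sigma> ?R"
      using restrict_eq[OF \<sigma>(2)] \<pi>(2) by simp
    with \<sigma>(1) show "y \<in> {restrict \<sigma> ?R | \<sigma>. \<sigma> \<in> galois_group p}"
      by blast
  qed
  with \<open>card ?R = 4\<close> bij show ?thesis
    unfolding is_4T2_def by blast
qed

section \<open>Discriminants via the derivative\<close>

lemma prod_differences_eq_sign_prod_squares:
  fixes r :: "nat \<Rightarrow> 'a::comm_ring_1"
  shows "(\<Prod>i<n. \<Prod>j\<in>{..<n} - {i}. r i - r j) =
    (- 1) ^ (n * (n - 1) div 2) * (\<Prod>i<n. \<Prod>j\<in>{i<..<n}. (r i - r j)\<^sup>2)"
proof (induction n)
  case (Suc n)
  have "(\<Prod>i<n. \<Prod>j\<in>{..<Suc n} - {i}. r i - r j) =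
      (\<Prod>i<n. (r i - r n) * (\<Prod>j\<in>{..<n} - {i}. r i - r j))"
    by (rule prod.cong) (auto simp: lessThan_Suc insert_Diff_if)
  then have new_row: "(\<Prod>i<Suc n. \<Prod>j\<in>{..<Suc n} - {i}. r i - r j) =
      (\<Prod>i<n. \<Prod>j\<in>{..<n} - {i}. r i - r j) * ((\<Prod>i<n. r i - r n) * (\<Prod>j<n. r n - r j))"
    by (simp add: prod.distrib lessThan_Suc mult_ac)
  have "(\<Prod>i<n. \<Prod>j\<in>{i<..<Suc n}. (r i - r j)\<^sup>2) =
      (\<Prod>i<n. (r i - r n)\<^sup>2 * (\<Prod>j\<in>{i<..<n}. (r i - r j)\<^sup>2))"
  proof (rule prod.cong)
    fix i assume "i \<in> {..<n}"
    then have "{i<..<Suc n} = insert n {i<..<n}"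
      by auto
    then show "(\<Prod>j\<in>{i<..<Suc n}. (r i - r j)\<^sup>2) = (r i - r n)\<^sup>2 * (\<Prod>j\<in>{i<..<n}. (r i - r j)\<^sup>2)"
      by simp
  qed simp
  moreover have "{n<..<Suc n} = {}"
    by auto
  ultimately have new_squares: "(\<Prod>i<Suc n. \<Prod>j\<in>{i<..<Suc n}. (r i - r j)\<^sup>2) =
      (\<Prod>i<n. \<Prod>j\<in>{i<..<n}. (r i - r j)\<^sup>2) * (\<Prod>i<n. (r i - r n)\<^sup>2)"
    by (simp add: prod.distrib mult_ac)
  have "(\<Prod>i<n. r i - r n) * (\<Prod>j<n. r n - r j) = (\<Prod>i<n. - ((r i - r n)\<^sup>2))"
    by (simp add: prod.distrib[symmetric] power2_eq_square algebra_simps)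
  also have "\<dots> = (- 1) ^ n * (\<Prod>i<n. (r i - r n)\<^sup>2)"
    by (simp add: prod_uminus)
  finally have signs: "(\<Prod>i<n. r i - r n) * (\<Prod>j<n. r n - r j) = (- 1) ^ n * (\<Prod>i<n. (r i - r n)\<^sup>2)" .
  have "Suc n * (Suc n - 1) div 2 = n * (n - 1) div 2 + n"
    by (cases n) (simp_all add: algebra_simps)
  then show ?case
    unfolding new_row signs Suc.IH new_squares by (simp add: power_add mult_ac)
qed simp

lemma poly_pderiv_prod_linear_at_root:
  fixes r :: "nat \<Rightarrow> 'a::idom"
  assumes "i < n"
  shows "poly (pderiv (\<Prod>j<n. [:- r j, 1:])) (r i) = (\<Prod>j\<in>{..<n} - {i}. r i - r j)"
proof -
  have "poly (pderiv (\<Prod>j<n. [:- r j, 1:])) (r i) = (\<Sum>k<n. \<Prod>j\<in>{..<n} - {k}. r i - r j)"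
    by (simp add: pderiv_prod poly_sum poly_prod pderiv_pCons)
  also have "\<dots> = (\<Sum>k\<in>{i}. \<Prod>j\<in>{..<n} - {k}. r i - r j)"
    using assms by (intro sum.mono_neutral_right) (auto intro!: prod_zero)
  finally show ?thesis
    by simp
qed

lemma disc_monic_eq_prod_pderiv:
  assumes monic: "lead_coeff p = 1"
  obtains r where "map_poly of_rat p = (\<Prod>i<degree p. [:- r i, 1:])"
    and "disc p = (- 1) ^ (degree p * (degree p - 1) div 2) *
      (\<Prod>i<degree p. poly (pderiv (map_poly of_rat p)) (r i))"
proof -
  let ?P = "map_poly (of_rat :: rat \<Rightarrow> complex) p"
  define rs where "rs = (SOME rs. ?P = smult (of_rat (lead_coeff p)) (\<Prod>r\<leftarrow>rs. [:- r, 1:]))"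
  have "\<exists>rs. ?P = smult (of_rat (lead_coeff p)) (\<Prod>r\<leftarrow>rs. [:- r, 1:])"
  proof -
    obtain rs where rs: "mset rs = proots ?P"
      using ex_mset by blast
    have "lead_coeff ?P = of_rat (lead_coeff p)"
      by (simp add: degree_map_poly coeff_map_poly)
    moreover have "smult (lead_coeff ?P) (\<Prod>x\<in>#proots ?P. [:- x, 1:]) = ?P"
      by (rule complex_poly_decompose_multiset)
    moreover have "(\<Prod>x\<in>#proots ?P. [:- x, 1:]) = (\<Prod>x\<leftarrow>rs. [:- x, 1:])"
      by (subst prod_mset_prod_list[symmetric]) (simp add: rs)
    ultimately show ?thesis
      by metis
  qed
  then have "?P = smult (of_rat (lead_coeff p)) (\<Prod>r\<leftarrow>rs. [:- r, 1:])"
    unfolding rs_def by (rule someI_ex)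
  then have P: "?P = (\<Prod>i<length rs. [:- (rs ! i), 1:])"
    using monic by (simp add: prod.list_conv_set_nth atLeast0LessThan)
  have "degree ?P = length rs"
    unfolding P by (subst degree_prod_sum_eq) auto
  then have n: "length rs = degree p"
    by (simp add: degree_map_poly)
  define sign :: complex where "sign = (- 1) ^ (degree p * (degree p - 1) div 2)"
  have "sign * sign = 1"
    unfolding sign_def by (simp flip: power_mult_distrib)
  then have squares: "(\<Prod>i<degree p. \<Prod>j\<in>{i<..<degree p}. (rs ! i - rs ! j)\<^sup>2) =
      sign * (\<Prod>i<degree p. \<Prod>j\<in>{..<degree p} - {i}. rs ! i - rs ! j)"
    unfolding prod_differences_eq_sign_prod_squares sign_def by (simp add: mult.assoc[symmetric])
  have "disc p = (\<Prod>i<degree p. \<Prod>j\<in>{i<..<degree p}. (rs ! i - rs ! j)\<^sup>2)"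
    unfolding disc_def Let_def rs_def[symmetric] by (simp add: monic n)
  also have "\<dots> = sign * (\<Prod>i<degree p. poly (pderiv ?P) (rs ! i))"
    unfolding squares P n by (simp add: poly_pderiv_prod_linear_at_root)
  finally show ?thesis
    using that[of "\<lambda>i. rs ! i"] P n unfolding sign_def by simp
qed

lemma complex_nth_root_exists:
  assumes "n > 0"
  shows "\<exists>z::complex. z ^ n = c"
proof (cases "c = 0")
  case False
  then have "card {z::complex. z ^ n = c} \<noteq> 0"
    using card_nth_roots[OF False assms] assms by simp
  then show ?thesis
    by (metis (mono_tags) card.empty empty_Collect_eq)
qed (use assms in auto)

lemma card_complex_nth_roots_le: "n > 0 \<Longrightarrow> card {z::complex. z ^ n = c} \<le> n"
  by (cases "c = 0") (simp_all add: card_nth_roots)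

definition \<omega> :: complex where
  "\<omega> = Complex (- 1 / 2) (sqrt 3 / 2)"

lemma omega_squared_plus_omega: "\<omega>\<^sup>2 + \<omega> + 1 = 0"
  unfolding \<omega>_def by (simp add: complex_eq_iff power2_eq_square)

lemma omega_cube: "\<omega> ^ 3 = 1"
proof -
  have "\<omega> ^ 3 - 1 = (\<omega> - 1) * (\<omega>\<^sup>2 + \<omega> + 1)"
    by algebra
  then show ?thesis
    using omega_squared_plus_omega by simp
qed

lemma omega_neq_1: "\<omega> \<noteq> 1"
  unfolding \<omega>_def by (simp add: complex_eq_iff)

lemma cube_eq_cube_cases:
  fixes z u :: complex
  assumes "z ^ 3 = u ^ 3"
  shows "z = u \<or> z = u * \<omega> \<or> z = u * \<omega>\<^sup>2"
proof -
  have "z ^ 3 - u ^ 3 = (z - u) * (z - u * \<omega>) * (z - u * \<omega>\<^sup>2)"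
    using omega_squared_plus_omega by algebra
  with assms show ?thesis
    by auto
qed

lemma sixth_power_eq_in_subfield:
  fixes z c :: complex
  assumes S: "is_subfield S" and "c \<in> S" "\<omega> \<in> S" and eq: "z ^ 6 = c ^ 6"
  shows "z \<in> S"
proof -
  have "(z ^ 3 - c ^ 3) * (z ^ 3 - (- c) ^ 3) = z ^ 6 - c ^ 6"
    by algebra
  with eq have "z ^ 3 = c ^ 3 \<or> z ^ 3 = (- c) ^ 3"
    by (simp only: diff_self mult_eq_0_iff right_minus_eq)
  then obtain d where "d \<in> S" "z ^ 3 = d ^ 3"
    using assms(2) subfield_minus[OF S] by blast
  then show ?thesis
    using cube_eq_cube_cases[of z d] assms(3) subfield_mult[OF S] subfield_power[OF S] by blast
qed

lemma sixth_power_factorization: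
  fixes u x :: complex
  shows "(\<Prod>k<6. [u, u * \<omega>, u * \<omega>\<^sup>2, - u, - u * \<omega>, - u * \<omega>\<^sup>2] ! k - x) = x ^ 6 - u ^ 6"
proof -
  have "(\<Prod>k<6. [u, u * \<omega>, u * \<omega>\<^sup>2, - u, - u * \<omega>, - u * \<omega>\<^sup>2] ! k - x) =
      ((u - x) * (u * \<omega> - x) * (u * \<omega>\<^sup>2 - x)) * ((- u - x) * (- u * \<omega> - x) * (- u * \<omega>\<^sup>2 - x))"
    by (simp add: eval_nat_numeral lessThan_Suc mult_ac)
  also have "\<dots> = (u ^ 3 - x ^ 3) * (- (u ^ 3) - x ^ 3)"
    using omega_squared_plus_omega by algebra
  also have "\<dots> = x ^ 6 - u ^ 6"
    by algebra
  finally show ?thesis .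
qed

lemma quadratic_roots:
  fixes A B u v w :: complex
  assumes "u \<noteq> v" "u\<^sup>2 + A * u + B = 0" "v\<^sup>2 + A * v + B = 0"
  shows "u * v = B" and "w\<^sup>2 + A * w + B = 0 \<longleftrightarrow> w = u \<or> w = v"
proof -
  have "(u - v) * (u + v + A) = 0"
    using assms(2,3) by algebra
  then have sum: "u + v = - A"
    using assms(1) by (simp add: eq_neg_iff_add_eq_0)
  then show prod: "u * v = B"
    using assms(2) by algebra
  have "w\<^sup>2 + A * w + B = (w - u) * (w - v)"
    using sum prod by algebra
  then show "w\<^sup>2 + A * w + B = 0 \<longleftrightarrow> w = u \<or> w = v"
    by simp
qed

lemma not_irreducible_if_factors:
  fixes p u v :: "'a::field poly"
  assumes "p = u * v" "degree u > 0" "degree v > 0"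
  shows "\<not> irreducible p"
proof
  assume "irreducible p"
  then have "is_unit u \<or> is_unit v"
    using assms(1) irreducibleD by blast
  with assms show False
    by (metis degree_0 is_unit_iff_degree less_irrefl)
qed

lemma irreducible_if_irreducible_pcompose:
  fixes p q :: "'a::field poly"
  assumes irr: "irreducible (pcompose p q)" and q: "degree q > 0"
  shows "irreducible p"
proof (rule irreducibleI)
  show p0: "p \<noteq> 0"
    using irr by auto
  show "\<not> is_unit p"
  proof
    assume "is_unit p"
    then have "degree (pcompose p q) = 0"
      using p0 by (simp add: degree_pcompose is_unit_iff_degree)
    moreover have "pcompose p q \<noteq> 0"
      using irr by auto
    ultimately show False
      using irr irreducible_not_unit is_unit_iff_degree by blast
  qed
next
  fix u v assume uv: "p = u * v"
  then have "pcompose p q = pcompose u q * pcompose v q"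
    by (simp add: pcompose_mult)
  then have "degree (pcompose u q) = 0 \<or> degree (pcompose v q) = 0"
    using not_irreducible_if_factors irr by blast
  moreover have "u \<noteq> 0" "v \<noteq> 0"
    using uv irr by auto
  ultimately show "is_unit u \<or> is_unit v"
    using q by (auto simp: degree_pcompose is_unit_iff_degree)
qed

section \<open>The trinomial and its roots\<close>

locale trinomial12 =
  fixes a b :: rat
  assumes irr: "irreducible (monom 1 12 + monom a 6 + [:b:])"
begin

definition "f = monom 1 12 + monom a 6 + [:b:]"
definition "g4 = monom 1 4 + monom a 2 + [:b:]"
definition "g6 = monom 1 6 + monom a 3 + [:b:]"

abbreviation "A \<equiv> (of_rat a :: complex)"
abbreviation "B \<equiv> (of_rat b :: complex)"

lemma ceval_f: "ceval f z = (z ^ 6)\<^sup>2 + A * z ^ 6 + B"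
  by (simp add: f_def flip: power_mult)

lemma ceval_g4: "ceval g4 z = (z\<^sup>2)\<^sup>2 + A * z\<^sup>2 + B"
  by (simp add: g4_def flip: power_mult)

lemma ceval_g6: "ceval g6 z = (z ^ 3)\<^sup>2 + A * z ^ 3 + B"
  by (simp add: g6_def flip: power_mult)

lemma irreducible_f: "irreducible f"
  using irr by (simp add: f_def)

lemma g4_ne_0: "g4 \<noteq> 0"
proof -
  have "coeff g4 4 = 1"
    by (simp add: g4_def coeff_monom monom_0[symmetric] del: monom_0)
  then show ?thesis
    by auto
qed

lemma g6_ne_0: "g6 \<noteq> 0"
proof -
  have "coeff g6 6 = 1"
    by (simp add: g6_def coeff_monom monom_0[symmetric] del: monom_0)
  then show ?thesis
    by auto
qed

lemma degree_monom_6_plus_const: "degree (monom 1 6 + [:c :: rat:]) = 6"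
  by (subst degree_add_eq_left) (simp_all add: degree_monom_eq)

lemma b_ne_0: "b \<noteq> 0"
proof
  assume b: "b = 0"
  have "f = monom 1 6 * (monom 1 6 + [:a:])"
    unfolding f_def by (intro poly_eq_poly_eq_iff[THEN iffD1] ext) (simp add: b poly_monom algebra_simps)
  then show False
    using not_irreducible_if_factors irreducible_f degree_monom_6_plus_const
    by (metis degree_monom_eq one_neq_zero zero_less_numeral)
qed

lemma a_squared_ne_4b: "a\<^sup>2 \<noteq> 4 * b"
proof
  assume "a\<^sup>2 = 4 * b"
  then have b: "b = a * a / 4"
    by (simp add: power2_eq_square)
  have "f = (monom 1 6 + [:a / 2:]) * (monom 1 6 + [:a / 2:])"
    unfolding f_def by (intro poly_eq_poly_eq_iff[THEN iffD1] ext) (simp add: poly_monom algebra_simps b)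
  then show False
    using not_irreducible_if_factors irreducible_f degree_monom_6_plus_const by (metis zero_less_numeral)
qed

lemma irreducible_g4: "irreducible g4"
proof (rule irreducible_if_irreducible_pcompose)
  have "f = pcompose g4 (monom 1 3)"
    unfolding f_def g4_def
    by (intro poly_eq_poly_eq_iff[THEN iffD1] ext) (simp add: poly_pcompose poly_monom flip: power_mult)
  then show "irreducible (pcompose g4 (monom 1 3))"
    using irreducible_f by simp
qed (simp add: degree_monom_eq)

definition "t1 = (- A + csqrt (A\<^sup>2 - 4 * B)) / 2"
definition "t2 = - A - t1"

lemma t1_t2_roots: "t1\<^sup>2 + A * t1 + B = 0" "t2\<^sup>2 + A * t2 + B = 0"
proof -
  define d where "d = csqrt (A\<^sup>2 - 4 * B)"
  have "2 * t1 = - A + d"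
    unfolding t1_def d_def by simp
  then have "4 * (t1\<^sup>2 + A * t1 + B) = d\<^sup>2 - (A\<^sup>2 - 4 * B)"
    by algebra
  then show "t1\<^sup>2 + A * t1 + B = 0"
    by (simp add: d_def del: distrib_left_numeral)
  then show "t2\<^sup>2 + A * t2 + B = 0"
    unfolding t2_def by (simp add: algebra_simps power2_eq_square)
qed

lemma t1_ne_t2: "t1 \<noteq> t2"
proof
  assume "t1 = t2"
  then have "csqrt (A\<^sup>2 - 4 * B) = 0"
    unfolding t2_def t1_def by (simp add: field_simps)
  then have "of_rat (a\<^sup>2 - 4 * b) = (0 :: complex)"
    by (simp add: of_rat_diff of_rat_mult of_rat_power)
  then show False
    using a_squared_ne_4b by simp
qed

lemma t1_mult_t2: "t1 * t2 = B"
  by (rule quadratic_roots(1)[OF t1_ne_t2 t1_t2_roots])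

lemma quadratic_resolvent_iff: "w\<^sup>2 + A * w + B = 0 \<longleftrightarrow> w = t1 \<or> w = t2"
  by (rule quadratic_roots(2)[OF t1_ne_t2 t1_t2_roots])

lemma t1_ne_0: "t1 \<noteq> 0" and t2_ne_0: "t2 \<noteq> 0"
  using t1_mult_t2 b_ne_0 by auto

definition "c1 = (SOME z. z ^ 6 = t1)"
definition "c2 = (SOME z. z ^ 6 = t2)"
definition "\<alpha> = c1 ^ 3"
definition "\<beta> = c2 ^ 3"

lemma c1_pow_6: "c1 ^ 6 = t1" and c2_pow_6: "c2 ^ 6 = t2"
  unfolding c1_def c2_def by (rule someI_ex, rule complex_nth_root_exists, simp)+

lemma c1_ne_0: "c1 \<noteq> 0"
  using c1_pow_6 t1_ne_0 by auto

lemma alpha_squared: "\<alpha>\<^sup>2 = t1" and beta_squared: "\<beta>\<^sup>2 = t2"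
  unfolding \<alpha>_def \<beta>_def using c1_pow_6 c2_pow_6 by (simp_all flip: power_mult)

lemma alpha_beta_squared: "(\<alpha> * \<beta>)\<^sup>2 = B"
  by (simp add: power_mult_distrib alpha_squared beta_squared t1_mult_t2)

lemma croots_f_iff: "z \<in> croots f \<longleftrightarrow> z ^ 6 = t1 \<or> z ^ 6 = t2"
  unfolding croots_ceval mem_Collect_eq ceval_f quadratic_resolvent_iff ..

lemma croots_g6_iff: "z \<in> croots g6 \<longleftrightarrow> z ^ 3 = t1 \<or> z ^ 3 = t2"
  unfolding croots_ceval mem_Collect_eq ceval_g6 quadratic_resolvent_iff ..

lemma croots_g4: "croots g4 = {\<alpha>, - \<alpha>, \<beta>, - \<beta>}"
proof -
  have "z \<in> croots g4 \<longleftrightarrow> z\<^sup>2 = \<alpha>\<^sup>2 \<or> z\<^sup>2 = \<beta>\<^sup>2" for z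
    unfolding croots_ceval mem_Collect_eq ceval_g4 quadratic_resolvent_iff alpha_squared beta_squared ..
  then show ?thesis
    by (auto simp: power2_eq_iff)
qed

lemma alpha_beta_distinct:
  "\<alpha> \<noteq> 0" "\<beta> \<noteq> 0" "\<alpha> \<noteq> - \<alpha>" "\<beta> \<noteq> - \<beta>" "\<alpha> \<noteq> \<beta>" "\<alpha> \<noteq> - \<beta>" "- \<alpha> \<noteq> \<beta>" "- \<alpha> \<noteq> - \<beta>"
  using alpha_squared beta_squared t1_ne_0 t2_ne_0 t1_ne_t2
  by (auto simp: power2_eq_square) (metis minus_mult_minus)+

lemma card_croots_g4: "card (croots g4) = 4"
  unfolding croots_g4 using alpha_beta_distinct by auto

lemma alpha_beta_in_croots_g4: "\<alpha> \<in> croots g4" "\<beta> \<in> croots g4"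
  by (simp_all add: croots_g4)

section \<open>Bounds for the Galois group of the trinomial\<close>

abbreviation "SFf \<equiv> splitting_field f"

lemma c1_c2_in_croots_f: "c1 \<in> croots f" "c2 \<in> croots f"
  using c1_pow_6 c2_pow_6 by (simp_all add: croots_f_iff)

lemma c1_c2_in_SFf: "c1 \<in> SFf" "c2 \<in> SFf"
  using c1_c2_in_croots_f croots_subset_splitting_field by blast+

lemma omega_in_SFf: "\<omega> \<in> SFf"
proof -
  have "(\<omega> * c1) ^ 6 = (\<omega> ^ 3)\<^sup>2 * c1 ^ 6"
    by (simp add: power_mult_distrib flip: power_mult)
  then have "\<omega> * c1 \<in> SFf"
    using omega_cube c1_pow_6 croots_f_iff croots_subset_splitting_field by auto
  then have "\<omega> * c1 / c1 \<in> SFf"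
    using c1_c2_in_SFf subfield_divide[OF subfield_splitting_field] by blast
  then show ?thesis
    using c1_ne_0 by simp
qed

lemma croots_g4_subset_SFf: "croots g4 \<subseteq> SFf"
  unfolding croots_g4 \<alpha>_def \<beta>_def
  using c1_c2_in_SFf subfield_power[OF subfield_splitting_field] subfield_minus[OF subfield_splitting_field]
  by auto

lemma croots_g6_subset_SFf: "croots g6 \<subseteq> SFf"
proof
  fix z assume "z \<in> croots g6"
  moreover have "(csqrt z) ^ 6 = z ^ 3"
    using power_mult[of "csqrt z" 2 3] by simp
  ultimately have "csqrt z \<in> croots f"
    using croots_g6_iff croots_f_iff by simp
  then have "(csqrt z)\<^sup>2 \<in> SFf"
    using croots_subset_splitting_field subfield_power[OF subfield_splitting_field] by blast
  then show "z \<in> SFf"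
    by simp
qed

lemma croots_f_subset_by_omega:
  assumes S: "is_subfield S" and "c1 \<in> S" "c2 \<in> S" "\<omega> \<in> S"
  shows "croots f \<subseteq> S"
proof
  fix z assume "z \<in> croots f"
  then have "z ^ 6 = c1 ^ 6 \<or> z ^ 6 = c2 ^ 6"
    using croots_f_iff c1_pow_6 c2_pow_6 by simp
  then show "z \<in> S"
    using sixth_power_eq_in_subfield[OF S] assms by blast
qed

text \<open>A root z of f is a square root of the root z^2 of g6, and z^3 = +-c^3 for c = c1 or c2,
  so z = +-c^3 / z^2.\<close>
lemma croots_f_subset_by_g6:
  assumes S: "is_subfield S" and "c1 \<in> S" "c2 \<in> S" and R6: "croots g6 \<subseteq> S"
  shows "croots f \<subseteq> S"
proof
  fix z assume z: "z \<in> croots f"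
  then obtain c where c: "c \<in> S" "z ^ 6 = c ^ 6"
    using croots_f_iff c1_pow_6 c2_pow_6 assms(2,3) by metis
  have "(z ^ 3 - c ^ 3) * (z ^ 3 + c ^ 3) = z ^ 6 - c ^ 6"
    by algebra
  then have "z ^ 3 = c ^ 3 \<or> z ^ 3 = - (c ^ 3)"
    using c(2) by (simp add: eq_neg_iff_add_eq_0)
  then obtain d where d: "d \<in> S" "z ^ 3 = d"
    using c(1) subfield_power[OF S] subfield_minus[OF S] by blast
  have "z \<noteq> 0"
    using z croots_f_iff t1_ne_0 t2_ne_0 by auto
  then have "z = d / z\<^sup>2"
    using d(2) by (simp add: field_simps power3_eq_cube power2_eq_square)
  moreover have "z\<^sup>2 \<in> S"
    using z R6 croots_f_iff croots_g6_iff by (auto simp flip: power_mult)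
  ultimately show "z \<in> S"
    using d(1) subfield_divide[OF S] by metis
qed

lemma galois_group_omega:
  assumes \<sigma>: "\<sigma> \<in> galois_group f"
  shows "\<sigma> \<omega> \<in> {\<omega>, \<omega>\<^sup>2}"
proof -
  have hom: "field_hom_on SFf \<sigma>"
    by (rule galois_group_field_hom_on[OF \<sigma>])
  have "(\<sigma> \<omega>) ^ 3 = 1 ^ 3"
    using field_hom_on_power[OF hom omega_in_SFf, of 3] omega_cube field_hom_on_1[OF hom] by simp
  then have "\<sigma> \<omega> \<in> {1, \<omega>, \<omega>\<^sup>2}"
    using cube_eq_cube_cases by fastforce
  moreover have "\<sigma> \<omega> \<noteq> \<sigma> 1"
    using field_hom_on_inj[OF hom] omega_in_SFf subfield_1[OF subfield_splitting_field] omega_neq_1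
    by (meson inj_onD)
  ultimately show ?thesis
    using field_hom_on_1[OF hom] by auto
qed

text \<open>An automorphism of f is determined by the images of omega, c1 and c2; once its action
  on the roots alpha = c1^3, beta = c2^3 of g4 is fixed, there are 2 choices for the image of omega
  and 3 each for those of c1 and c2.\<close>
lemma card_galois_group_f_le_g4: "card (galois_group f) \<le> 18 * card (galois_group g4)"
proof (rule card_galois_group_le_mult[OF g4_ne_0 croots_g4_subset_SFf, where
      h = "\<lambda>\<sigma>. (\<sigma> \<omega>, \<sigma> c1, \<sigma> c2)" and X = "\<lambda>\<rho>. {\<omega>, \<omega>\<^sup>2} \<times> {u. u ^ 3 = \<rho> \<alpha>} \<times> {v. v ^ 3 = \<rho> \<beta>}"])
  fix \<sigma>1 \<sigma>2 assume \<sigma>: "\<sigma>1 \<in> galois_group f" "\<sigma>2 \<in> galois_group f"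
    and "(\<sigma>1 \<omega>, \<sigma>1 c1, \<sigma>1 c2) = (\<sigma>2 \<omega>, \<sigma>2 c1, \<sigma>2 c2)"
  then have "croots f \<subseteq> {x \<in> SFf. \<sigma>1 x = \<sigma>2 x}"
    using c1_c2_in_SFf omega_in_SFf by (intro croots_f_subset_by_omega
        subfield_field_hom_on_equalizer galois_group_field_hom_on) auto
  then show "\<sigma>1 = \<sigma>2"
    by (rule galois_group_eqI[OF \<sigma>])
next
  fix \<sigma> assume \<sigma>: "\<sigma> \<in> galois_group f"
  have "(\<sigma> c1) ^ 3 = \<sigma> \<alpha>" "(\<sigma> c2) ^ 3 = \<sigma> \<beta>"
    unfolding \<alpha>_def \<beta>_def
    using field_hom_on_power[OF galois_group_field_hom_on[OF \<sigma>]] c1_c2_in_SFf by simp_all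
  then show "(\<sigma> \<omega>, \<sigma> c1, \<sigma> c2) \<in> {\<omega>, \<omega>\<^sup>2} \<times> {u. u ^ 3 = restrict \<sigma> (croots g4) \<alpha>} \<times>
      {v. v ^ 3 = restrict \<sigma> (croots g4) \<beta>}"
    using galois_group_omega[OF \<sigma>] alpha_beta_in_croots_g4 by simp
next
  fix \<rho> :: "complex \<Rightarrow> complex"
  show "finite ({\<omega>, \<omega>\<^sup>2} \<times> {u. u ^ 3 = \<rho> \<alpha>} \<times> {v. v ^ 3 = \<rho> \<beta>})"
    by (intro finite_cartesian_product finite_nth_roots) auto
  have "card {\<omega>, \<omega>\<^sup>2} * (card {u. u ^ 3 = \<rho> \<alpha>} * card {v. v ^ 3 = \<rho> \<beta>}) \<le> 2 * (3 * 3)"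
    by (intro mult_le_mono card_complex_nth_roots_le) (auto simp: card_insert_le_m1)
  then show "card ({\<omega>, \<omega>\<^sup>2} \<times> {u. u ^ 3 = \<rho> \<alpha>} \<times> {v. v ^ 3 = \<rho> \<beta>}) \<le> 18"
    by (simp add: card_cartesian_product)
qed

lemma card_galois_group_f_le_g6: "card (galois_group f) \<le> 4 * card (galois_group g6)"
proof (rule card_galois_group_le_mult[OF g6_ne_0 croots_g6_subset_SFf, where
      h = "\<lambda>\<sigma>. (\<sigma> c1, \<sigma> c2)" and X = "\<lambda>\<rho>. {u. u\<^sup>2 = \<rho> (c1\<^sup>2)} \<times> {v. v\<^sup>2 = \<rho> (c2\<^sup>2)}"])
  fix \<sigma>1 \<sigma>2 assume \<sigma>: "\<sigma>1 \<in> galois_group f" "\<sigma>2 \<in> galois_group f"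
    and "\<forall>x\<in>croots g6. \<sigma>1 x = \<sigma>2 x" "(\<sigma>1 c1, \<sigma>1 c2) = (\<sigma>2 c1, \<sigma>2 c2)"
  then have "croots f \<subseteq> {x \<in> SFf. \<sigma>1 x = \<sigma>2 x}"
    using c1_c2_in_SFf croots_g6_subset_SFf by (intro croots_f_subset_by_g6
        subfield_field_hom_on_equalizer galois_group_field_hom_on) auto
  then show "\<sigma>1 = \<sigma>2"
    by (rule galois_group_eqI[OF \<sigma>])
next
  fix \<sigma> assume \<sigma>: "\<sigma> \<in> galois_group f"
  have "c1\<^sup>2 \<in> croots g6" "c2\<^sup>2 \<in> croots g6"
    using c1_pow_6 c2_pow_6 by (simp_all add: croots_g6_iff flip: power_mult)
  then show "(\<sigma> c1, \<sigma> c2) \<in> {u. u\<^sup>2 = restrict \<sigma> (croots g6) (c1\<^sup>2)} \<times>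
      {v. v\<^sup>2 = restrict \<sigma> (croots g6) (c2\<^sup>2)}"
    using field_hom_on_power[OF galois_group_field_hom_on[OF \<sigma>]] c1_c2_in_SFf by simp
next
  fix \<rho> :: "complex \<Rightarrow> complex"
  show "finite ({u. u\<^sup>2 = \<rho> (c1\<^sup>2)} \<times> {v. v\<^sup>2 = \<rho> (c2\<^sup>2)})"
    by (intro finite_cartesian_product finite_nth_roots) auto
  have "card {u. u\<^sup>2 = \<rho> (c1\<^sup>2)} * card {v. v\<^sup>2 = \<rho> (c2\<^sup>2)} \<le> 2 * 2"
    by (intro mult_le_mono card_complex_nth_roots_le) auto
  then show "card ({u. u\<^sup>2 = \<rho> (c1\<^sup>2)} \<times> {v. v\<^sup>2 = \<rho> (c2\<^sup>2)}) \<le> 4"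
    by (simp add: card_cartesian_product)
qed

section \<open>The discriminant and the group 4T2\<close>

lemma galois_group_g4_mult_alpha_beta:
  "\<sigma> \<in> galois_group g4 \<Longrightarrow> \<sigma> (\<alpha> * \<beta>) = \<sigma> \<alpha> * \<sigma> \<beta>"
  using field_hom_on_mult[OF galois_group_field_hom_on] alpha_beta_in_croots_g4
    croots_subset_splitting_field by blast

lemma galois_group_g4_minus:
  assumes "\<sigma> \<in> galois_group g4"
  shows "\<sigma> (- \<alpha>) = - \<sigma> \<alpha>" "\<sigma> (- \<beta>) = - \<sigma> \<beta>"
  using field_hom_on_minus[OF galois_group_field_hom_on[OF assms]] alpha_beta_in_croots_g4
    croots_subset_splitting_field by blast+

text \<open>As sigma (- x) = - sigma x, an involution of the roots that is the identity as soon as it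
  fixes a root sends (alpha, beta) to (alpha, beta), (- alpha, - beta), (beta, alpha) or
  (- beta, - alpha).\<close>
lemma galois_group_g4_fixes_alpha_beta_if_4T2:
  assumes T: "is_4T2 g4" and \<sigma>: "\<sigma> \<in> galois_group g4"
  shows "\<sigma> (\<alpha> * \<beta>) = \<alpha> * \<beta>"
proof -
  have roots: "\<alpha> \<in> croots g4" "\<beta> \<in> croots g4" "- \<alpha> \<in> croots g4"
    by (simp_all add: croots_g4)
  have "\<sigma> \<alpha> \<in> croots g4" "\<sigma> \<beta> \<in> croots g4"
    using galois_group_croots[OF \<sigma>] roots by blast+
  then have "\<sigma> \<alpha> * \<sigma> \<beta> = \<alpha> * \<beta>"
    unfolding croots_g4
    using galois_group_action_if_4T2(1)[OF T \<sigma> roots(1)] galois_group_action_if_4T2(1)[OF T \<sigma> roots(2)]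
      galois_group_action_if_4T2(1)[OF T \<sigma> roots(3)] galois_group_g4_minus[OF \<sigma>]
      galois_group_action_if_4T2(2)[OF T \<sigma> roots(1) _ roots(2)]
      galois_group_action_if_4T2(2)[OF T \<sigma> roots(2) _ roots(1)] alpha_beta_distinct
    by (auto simp: algebra_simps)
  then show ?thesis
    using galois_group_g4_mult_alpha_beta[OF \<sigma>] by simp
qed

lemma galois_group_g4_negates_beta:
  assumes notin: "\<beta> \<notin> simple_extension \<alpha>"
  shows "\<exists>\<tau>\<in>galois_group g4. \<tau> \<alpha> = \<alpha> \<and> \<tau> \<beta> = - \<beta>"
proof -
  let ?F = "simple_extension \<alpha>"
  let ?K = "quad_extension ?F \<beta>"
  have F: "is_subfield ?F"
    using alpha_beta_in_croots_g4 by (intro subfield_simple_extension[OF irreducible_g4]) (simp add: croots_ceval)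
  have alpha_F: "\<alpha> \<in> ?F" "- \<alpha> \<in> ?F"
    using simple_extension_self subfield_minus[OF F] by auto
  have "\<beta>\<^sup>2 = of_rat (- a) - \<alpha>\<^sup>2"
    using beta_squared alpha_squared t2_def by (simp add: of_rat_minus)
  then have beta_sq_F: "\<beta>\<^sup>2 \<in> ?F"
    using subfield_diff[OF F of_rat_in_simple_extension subfield_power[OF F simple_extension_self]]
    by simp
  have "\<alpha> = \<alpha> + 0 * \<beta>" "- \<alpha> = - \<alpha> + 0 * \<beta>" "\<beta> = 0 + 1 * \<beta>" "- \<beta> = 0 + (- 1) * \<beta>"
    by simp_all
  moreover have "0 \<in> ?F" "1 \<in> ?F" "- 1 \<in> ?F"
    using subfield_0[OF F] subfield_1[OF F] subfield_minus[OF F] by auto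
  ultimately have "croots g4 \<subseteq> ?K"
    unfolding croots_g4 quad_extension_def using alpha_F by blast
  then have "splitting_field g4 \<subseteq> ?K"
    by (rule splitting_field_least[OF subfield_quad_extension[OF F notin beta_sq_F]])
  moreover have "?F \<subseteq> splitting_field g4" "\<beta> \<in> splitting_field g4"
    using simple_extension_least[OF subfield_splitting_field] alpha_beta_in_croots_g4
      croots_subset_splitting_field[of g4] by auto
  then have "?K \<subseteq> splitting_field g4"
    unfolding quad_extension_def using subfield_add[OF subfield_splitting_field]
      subfield_mult[OF subfield_splitting_field] by blast
  ultimately show ?thesis
    using galois_group_quad_conjugation[OF F notin beta_sq_F g4_ne_0] alpha_F by blast
qed

text \<open>If beta is not in Q(alpha), negating beta negates alpha beta; otherwise Q(alpha) is the
  splitting field and its invariant elements are rational.\<close>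
lemma alpha_beta_rational_if_4T2:
  assumes T: "is_4T2 g4"
  shows "\<alpha> * \<beta> \<in> \<rat>"
proof (cases "\<beta> \<in> simple_extension \<alpha>")
  case False
  then obtain \<tau> where \<tau>: "\<tau> \<in> galois_group g4" "\<tau> \<alpha> = \<alpha>" "\<tau> \<beta> = - \<beta>"
    using galois_group_g4_negates_beta by blast
  then have "\<tau> (\<alpha> * \<beta>) = - (\<alpha> * \<beta>)"
    using galois_group_g4_mult_alpha_beta[OF \<tau>(1)] by simp
  then show ?thesis
    using galois_group_g4_fixes_alpha_beta_if_4T2[OF T \<tau>(1)] alpha_beta_distinct by simp
next
  case True
  let ?F = "simple_extension \<alpha>"
  have F: "is_subfield ?F"
    using alpha_beta_in_croots_g4 by (intro subfield_simple_extension[OF irreducible_g4]) (simp add: croots_ceval)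
  have "croots g4 \<subseteq> ?F"
    unfolding croots_g4 using simple_extension_self True subfield_minus[OF F] by auto
  moreover have "\<alpha> * \<beta> \<in> ?F"
    using True simple_extension_self subfield_mult[OF F] by blast
  moreover have "degree g4 \<le> card (croots g4)"
    unfolding card_croots_g4
    by (rule degree_le) (auto simp: g4_def coeff_monom monom_0[symmetric] simp del: monom_0)
  ultimately show ?thesis
    using rational_if_galois_invariant[OF irreducible_g4 alpha_beta_in_croots_g4(1)]
      galois_group_g4_fixes_alpha_beta_if_4T2[OF T] by blast
qed

lemma b_square_iff_alpha_beta_rational: "(\<exists>r. b = r\<^sup>2) \<longleftrightarrow> \<alpha> * \<beta> \<in> \<rat>"
proof
  assume "\<exists>r. b = r\<^sup>2"
  then obtain r where "(\<alpha> * \<beta>)\<^sup>2 = (of_rat r)\<^sup>2"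
    using alpha_beta_squared by (auto simp: of_rat_power)
  then show "\<alpha> * \<beta> \<in> \<rat>"
    by (metis power2_eq_iff of_rat_minus Rats_of_rat)
next
  assume "\<alpha> * \<beta> \<in> \<rat>"
  then obtain r where "\<alpha> * \<beta> = of_rat r"
    by (auto elim: Rats_cases)
  then have "B = of_rat (r\<^sup>2)"
    using alpha_beta_squared by (simp add: of_rat_power)
  then show "\<exists>r. b = r\<^sup>2"
    by (metis of_rat_eq_iff)
qed

definition "root_label = (!) [\<alpha>, - \<alpha>, \<beta>, - \<beta>]"

lemma root_label:
  "root_label 0 = \<alpha>" "root_label 1 = - \<alpha>" "root_label (Suc 0) = - \<alpha>" "root_label 2 = \<beta>"
  "root_label 3 = - \<beta>"
  by (simp_all add: root_label_def)

lemma bij_root_label: "bij_betw root_label {0..<4} (croots g4)"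
proof -
  have "{0..<4::nat} = {0, 1, 2, 3}"
    by auto
  then show ?thesis
    unfolding bij_betw_def inj_on_def croots_g4 root_label_def using alpha_beta_distinct by auto
qed

text \<open>If alpha beta = r is rational then sigma beta = r / sigma alpha, so an automorphism is
  determined by the image of alpha, like an element of V4 by the image of 0.\<close>
lemma galois_group_g4_root_label_if_rational:
  assumes r: "\<alpha> * \<beta> = of_rat r" and \<sigma>: "\<sigma> \<in> galois_group g4" and \<pi>: "\<pi> \<in> klein4"
    and \<sigma>\<alpha>: "\<sigma> \<alpha> = root_label (\<pi> 0)" and i: "i < 4"
  shows "\<sigma> (root_label i) = root_label (\<pi> i)"
proof -
  have hom: "field_hom_on (splitting_field g4) \<sigma>"
    by (rule galois_group_field_hom_on[OF \<sigma>])
  have in_SF: "\<alpha> \<in> splitting_field g4"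
    using alpha_beta_in_croots_g4 croots_subset_splitting_field by blast
  have beta: "\<beta> = of_rat r / \<alpha>"
    using r alpha_beta_distinct by (simp add: field_simps)
  have \<sigma>\<beta>: "\<sigma> \<beta> = of_rat r / \<sigma> \<alpha>"
    unfolding beta using field_hom_on_divide[OF hom _ in_SF] field_hom_on_of_rat[OF hom]
      subfield_of_rat[OF subfield_splitting_field] by simp
  have quotients: "of_rat r / \<alpha> = \<beta>" "of_rat r / (- \<alpha>) = - \<beta>" "of_rat r / \<beta> = \<alpha>"
      "of_rat r / (- \<beta>) = - \<alpha>"
    unfolding r[symmetric] using alpha_beta_distinct by (auto simp: field_simps)
  have "root_label (\<pi> 1) = - root_label (\<pi> 0)" "root_label (\<pi> 2) = of_rat r / root_label (\<pi> 0)"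
      "root_label (\<pi> 3) = - (of_rat r / root_label (\<pi> 0))"
    using \<pi> unfolding klein4_def by (auto simp: perm4_def root_label quotients)
  moreover have "i \<in> {0, 1, 2, 3}"
    using i by auto
  ultimately show ?thesis
    using \<sigma>\<alpha> \<sigma>\<beta> galois_group_g4_minus[OF \<sigma>]
    by (elim insertE emptyE) (simp_all add: root_label)
qed

lemma is_4T2_if_alpha_beta_rational:
  assumes "\<alpha> * \<beta> \<in> \<rat>"
  shows "is_4T2 g4"
proof (rule is_4T2I[OF bij_root_label])
  obtain r where r: "\<alpha> * \<beta> = of_rat r"
    using assms by (auto elim: Rats_cases)
  have R: "croots g4 = root_label ` {0..<4}"
    using bij_root_label by (simp add: bij_betw_def)
  fix \<sigma> assume \<sigma>: "\<sigma> \<in> galois_group g4"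
  have "\<sigma> \<alpha> \<in> croots g4"
    using galois_group_croots[OF \<sigma> alpha_beta_in_croots_g4(1)] .
  then obtain j where j: "j < 4" "\<sigma> \<alpha> = root_label j"
    unfolding R by auto
  obtain \<pi> where \<pi>: "\<pi> \<in> klein4" "\<pi> 0 = j"
    using klein4_transitive[OF j(1)] by blast
  then show "\<exists>\<pi>\<in>klein4. \<forall>i<4. \<sigma> (root_label i) = root_label (\<pi> i)"
    using galois_group_g4_root_label_if_rational[OF r \<sigma> \<pi>(1)] j by auto
next
  obtain r where r: "\<alpha> * \<beta> = of_rat r"
    using assms by (auto elim: Rats_cases)
  let ?F = "simple_extension \<alpha>"
  have F: "is_subfield ?F"
    using alpha_beta_in_croots_g4 by (intro subfield_simple_extension[OF irreducible_g4]) (simp add: croots_ceval)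
  have "\<beta> = of_rat r / \<alpha>"
    using r alpha_beta_distinct by (simp add: field_simps)
  then have "\<beta> \<in> ?F"
    using subfield_divide[OF F of_rat_in_simple_extension simple_extension_self] by simp
  then have R_F: "croots g4 \<subseteq> ?F"
    unfolding croots_g4 using simple_extension_self subfield_minus[OF F] by auto
  fix \<pi> assume \<pi>: "\<pi> \<in> klein4"
  have "root_label (\<pi> 0) \<in> croots g4"
    using bij_root_label klein4_less_4[OF \<pi>, of 0] by (auto simp: bij_betw_def)
  then obtain \<sigma> where \<sigma>: "\<sigma> \<in> galois_group g4" "\<forall>q. \<sigma> (ceval q \<alpha>) = ceval q (root_label (\<pi> 0))"
    using galois_group_transitive[OF irreducible_g4 alpha_beta_in_croots_g4(1) R_F] by blast
  then have "\<sigma> \<alpha> = root_label (\<pi> 0)"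
    using \<sigma>(2)[rule_format, of "[:0, 1:]"] by simp
  then show "\<exists>\<sigma>\<in>galois_group g4. \<forall>i<4. \<sigma> (root_label i) = root_label (\<pi> i)"
    using galois_group_g4_root_label_if_rational[OF r \<sigma>(1) \<pi>] \<sigma>(1) by blast
qed

text \<open>The product of 2 r^6 + a over the roots r of f is a resultant of f and 2 x^6 + a; it
  is evaluated by factoring 2 x^6 + a over its six roots w, at each of which f takes the
  value b - a^2/4.\<close>
lemma prod_over_roots_of_f:
  fixes r :: "nat \<Rightarrow> complex"
  assumes roots: "\<And>x. (\<Prod>i<12. x - r i) = x ^ 12 + A * x ^ 6 + B"
  shows "(\<Prod>i<12. 2 * r i ^ 6 + A) = (4 * B - A\<^sup>2) ^ 6"
proof -
  obtain u where u: "u ^ 6 = - A / 2"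
    using complex_nth_root_exists[of 6 "- A / 2"] by auto
  define w where "w = (!) [u, u * \<omega>, u * \<omega>\<^sup>2, - u, - u * \<omega>, - u * \<omega>\<^sup>2]"
  have factor: "2 * x ^ 6 + A = 2 * (\<Prod>k<6. w k - x)" for x
  proof -
    have "(\<Prod>k<6. w k - x) = x ^ 6 - u ^ 6"
      unfolding w_def by (rule sixth_power_factorization)
    then show ?thesis
      using u by simp
  qed
  have omega_6: "\<omega> ^ 6 = 1" "(\<omega>\<^sup>2) ^ 6 = 1"
    using power_mult[of \<omega> 3 2] power_mult[of \<omega> 3 4] omega_cube by (simp_all flip: power_mult)
  have w_6: "w k ^ 6 = - A / 2" if "k < 6" for k
  proof -
    have "k \<in> {0, 1, 2, 3, 4, 5}"
      using that by auto
    then show ?thesis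
      using u omega_6 unfolding w_def by (auto simp: power_mult_distrib)
  qed
  have at_w: "(\<Prod>i<12. w k - r i) = B - A\<^sup>2 / 4" if "k < 6" for k
  proof -
    have "(\<Prod>i<12. w k - r i) = (w k ^ 6)\<^sup>2 + A * w k ^ 6 + B"
      using roots[of "w k"] by (simp flip: power_mult)
    then show ?thesis
      using w_6[OF that] by (simp add: field_simps power2_eq_square)
  qed
  have "(\<Prod>i<12. 2 * r i ^ 6 + A) = (\<Prod>i<12::nat. 2 * (\<Prod>k<6. w k - r i))"
    by (simp add: factor)
  also have "\<dots> = 2 ^ 12 * (\<Prod>k<6. \<Prod>i<12. w k - r i)"
    by (simp add: prod.distrib prod.swap[of _ "{..<12}"])
  also have "\<dots> = 2 ^ 12 * (B - A\<^sup>2 / 4) ^ 6"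
    by (simp add: at_w)
  also have "\<dots> = (4 * B - A\<^sup>2) ^ 6"
    by (simp add: field_simps eval_nat_numeral)
  finally show ?thesis .
qed

lemma disc_f: "disc f = of_rat (6 ^ 12 * b ^ 5 * (4 * b - a\<^sup>2) ^ 6)"
proof -
  let ?P = "map_poly (of_rat :: rat \<Rightarrow> complex) f"
  have P: "?P = monom 1 12 + monom A 6 + [:B:]"
    unfolding f_def by (simp add: map_poly_of_rat_add map_poly_monom monom_0[symmetric] del: monom_0)
  have coeff_12: "coeff f 12 = 1"
    by (simp add: f_def coeff_monom monom_0[symmetric] del: monom_0)
  have "degree f \<le> 12"
    by (rule degree_le) (auto simp: f_def coeff_monom monom_0[symmetric] simp del: monom_0)
  moreover have "12 \<le> degree f"
    using coeff_12 by (simp add: le_degree)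
  ultimately have deg: "degree f = 12"
    by (rule antisym)
  then have monic: "lead_coeff f = 1"
    using coeff_12 by simp
  obtain r where r: "?P = (\<Prod>i<12::nat. [:- r i, 1:])"
    and "disc f = (- 1) ^ (12 * (12 - 1) div 2) * (\<Prod>i<12. poly (pderiv ?P) (r i))"
    by (rule disc_monic_eq_prod_pderiv[OF monic, unfolded deg])
  then have disc: "disc f = (\<Prod>i<12. poly (pderiv ?P) (r i))"
    by simp
  have roots: "(\<Prod>i<12. x - r i) = x ^ 12 + A * x ^ 6 + B" for x
    using arg_cong[OF r, of "\<lambda>p. poly p x"] unfolding P by (simp add: poly_prod poly_monom)
  have "(\<Prod>i<12. r i) = B"
    using roots[of 0] by (simp add: prod_uminus)
  have "poly (pderiv ?P) x = 6 * (x ^ 5 * (2 * x ^ 6 + A))" for x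
    unfolding P by (simp add: pderiv_add pderiv_monom poly_monom pderiv_pCons algebra_simps
        flip: power_add)
  then have "disc f = 6 ^ 12 * (\<Prod>i<12. r i) ^ 5 * (\<Prod>i<12. 2 * r i ^ 6 + A)"
    unfolding disc by (simp add: prod.distrib prod_power_distrib)
  also have "\<dots> = 6 ^ 12 * B ^ 5 * (4 * B - A\<^sup>2) ^ 6"
    using \<open>(\<Prod>i<12. r i) = B\<close> prod_over_roots_of_f[OF roots] by simp
  finally show ?thesis
    by (simp add: of_rat_mult of_rat_power of_rat_diff)
qed

lemma disc_f_square_iff: "(\<exists>q. disc f = of_rat (q\<^sup>2)) \<longleftrightarrow> (\<exists>r. b = r\<^sup>2)"
proof
  assume "\<exists>q. disc f = of_rat (q\<^sup>2)"
  then obtain q where q: "6 ^ 12 * b ^ 5 * (4 * b - a\<^sup>2) ^ 6 = q\<^sup>2"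
    unfolding disc_f by (auto simp: of_rat_eq_iff)
  define X where "X = 6 ^ 6 * b\<^sup>2 * (4 * b - a\<^sup>2) ^ 3"
  have "6 ^ 12 * b ^ 5 * (4 * b - a\<^sup>2) ^ 6 = b * X\<^sup>2"
    unfolding X_def by algebra
  moreover have "X \<noteq> 0"
    unfolding X_def using b_ne_0 a_squared_ne_4b by simp
  ultimately have "b = (q / X)\<^sup>2"
    using q by (simp add: field_simps power_divide)
  then show "\<exists>r. b = r\<^sup>2" ..
next
  assume "\<exists>r. b = r\<^sup>2"
  then obtain r where "b = r\<^sup>2" ..
  then have "6 ^ 12 * b ^ 5 * (4 * b - a\<^sup>2) ^ 6 = (6 ^ 6 * r ^ 5 * (4 * b - a\<^sup>2) ^ 3)\<^sup>2"
    by (simp add: power_mult_distrib flip: power_mult)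
  then show "\<exists>q. disc f = of_rat (q\<^sup>2)"
    unfolding disc_f by metis
qed

lemma disc_f_square_iff_4T2: "(\<exists>q. disc f = of_rat (q\<^sup>2)) \<longleftrightarrow> is_4T2 g4"
  using disc_f_square_iff b_square_iff_alpha_beta_rational alpha_beta_rational_if_4T2
    is_4T2_if_alpha_beta_rational by blast

lemma card_galois_group_f_le_min:
  "card (galois_group f) \<le> min (18 * card (galois_group g4)) (4 * card (galois_group g6))"
  using card_galois_group_f_le_g4 card_galois_group_f_le_g6 by simp

end

theorem lemma3p1:
  fixes a b :: rat
  assumes irr: "irreducible (monom 1 12 + monom a 6 + [:b:])"
  shows "((\<exists>q::rat. disc (monom 1 12 + monom a 6 + [:b:]) = of_rat (q ^ 2))
            \<longleftrightarrow> is_4T2 (monom 1 4 + monom a 2 + [:b:]))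
       \<and> card (galois_group (monom 1 12 + monom a 6 + [:b:]))
           \<le> min (18 * card (galois_group (monom 1 4 + monom a 2 + [:b:])))
                  (4 * card (galois_group (monom 1 6 + monom a 3 + [:b:])))"
proof -
  interpret trinomial12 a b
    using irr by unfold_locales
  show ?thesis
    using disc_f_square_iff_4T2 card_galois_group_f_le_min unfolding f_def g4_def g6_def ..
qed

end
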